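(* Let $\lambda>0$, $\theta\in\mathbb R$, $f\in PC(\Gamma)$ bounded, and let $u\in C_b^2(\Gamma)$ satisfy $$Lu(\mathsf x)-\lambda u(\mathsf x)=f(\mathsf x)\ \ (\mathsf x\ne\mathsf v),\qquad u_i(0)=u_j(0)\ \ (1\le i,j\le N),\qquad \sum_{i=1}^N\rho_iu_i'(0)-\eta\lambda u(\mathsf v)=\eta\theta.$$ Let $X$ be the sticky diffusion generated by $(L,D(L))$ with stickiness $\eta$ (see context). Then for every $\mathsf x\in\Gamma$, $$u(\mathsf x)=-\mathbf E_{\mathsf x}\Big[\int_0^{+\infty}\big(f(X(s))\mathbf 1_{\{X(s)\ne\mathsf v\}}+\theta\mathbf 1_{\{X(s)=\mathsf v\}}\big)e^{-\lambda s}ds\Big].$$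
   Context: Star graph: fix $N\ge1$. $\Gamma$ is the quotient of the disjoint union of $N$ copies of $[0,\infty)$ obtained by identifying all the origins; points are written $(i,x)$, and $\mathsf v=(\cdot,0)$ is the unique vertex; metric $d((j,x),(i,y))=|x-y|$ if $i=j$, $x+y$ otherwise. A function $f:\Gamma\to\mathbb R$ is identified with $(f_1,\dots,f_N)$, $f_i(x)=f(i,x)$, $f_i(0)=f_j(0)$; derivatives are edgewise (one-sided at $0$). $C_0(\Gamma)$: continuous functions vanishing at infinity on each edge. $C^2(\Gamma)$: continuous $f$ with each $f_i\in C^2([0,\infty))$; $C_b^2(\Gamma)$: those with $f_i,f_i',f_i''$ bounded for all $i$. $PC(\Gamma)$: functions with each $f_i$ bounded continuous on $(0,\infty)$ and continuously extendable to $[0,\infty)$. Coefficients $\sigma,b\in PC(\Gamma)$ with $\sigma>\sigma_0>0$. $Lf(i,x)=\frac12\sigma_i^2(x)f_i''(x)+b_i(x)f_i'(x)$ for $x>0$, and $Lf(\mathsf v)$ is the common value of $\lim_{x\to0}L_if(x)$ when these coincide. For a stickiness $\eta\ge0$ (sticky when $\eta>0$) and $\rho_i>0$, $\sum_i\rho_i=1$: $D(L)=\{f\in C^2(\Gamma)\cap C_0(\Gamma): Lf\in C_0(\Gamma),\ \eta Lf(\mathsf v)=\sum_i\rho_if_i'(0)\}$; it generates a strongly continuous semigroup on $C_0(\Gamma)$ associated with a conservative continuous-path Markov process $X$; $\mathbf E_{\mathsf x}$ denotes expectation for $X(0)=\mathsf x$. *)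

theory Defs
  imports "HOL-Probability.Probability"
begin

text \<open>Points of the star graph with N edges are encoded as pairs (i,x) :: nat * real with
  i < N and x > 0 (the point x on edge i), and the unique vertex is encoded as (0,0).
  Edges are indexed 0..N-1.\<close>

definition vtx :: "nat \<times> real" where
  "vtx = (0, 0)"

definition Gamma :: "nat \<Rightarrow> (nat \<times> real) set" where
  "Gamma N = {(i, x). i < N \<and> 0 < x} \<union> {vtx}"

definition gdist :: "nat \<times> real \<Rightarrow> nat \<times> real \<Rightarrow> real" where
  "gdist p q = (if fst p = fst q then \<bar>snd p - snd q\<bar> else snd p + snd q)"

definition edge :: "(nat \<times> real \<Rightarrow> real) \<Rightarrow> nat \<Rightarrow> real \<Rightarrow> real" where
  "edge f i = (\<lambda>x. if x = 0 then f vtx else f (i, x))"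

definition d1 :: "(real \<Rightarrow> real) \<Rightarrow> real \<Rightarrow> real" where
  "d1 g x = vector_derivative g (at x within {0..})"

definition d2 :: "(real \<Rightarrow> real) \<Rightarrow> real \<Rightarrow> real" where
  "d2 g x = d1 (d1 g) x"

definition C2_half :: "(real \<Rightarrow> real) \<Rightarrow> bool" where
  "C2_half g \<longleftrightarrow> (\<exists>g1 g2. continuous_on {0..} g \<and> continuous_on {0..} g1 \<and> continuous_on {0..} g2 \<and>
      (\<forall>x\<ge>0. (g has_real_derivative g1 x) (at x within {0..}) \<and>
               (g1 has_real_derivative g2 x) (at x within {0..})))"

text \<open>Continuity on Gamma (w.r.t. the graph metric).\<close>
definition contG :: "nat \<Rightarrow> (nat \<times> real \<Rightarrow> real) \<Rightarrow> bool" where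
  "contG N f \<longleftrightarrow> (\<forall>i<N. continuous_on {0..} (edge f i))"

definition C0 :: "nat \<Rightarrow> (nat \<times> real \<Rightarrow> real) \<Rightarrow> bool" where
  "C0 N f \<longleftrightarrow> contG N f \<and> (\<forall>i<N. (edge f i \<longlongrightarrow> 0) at_top)"

definition C2G :: "nat \<Rightarrow> (nat \<times> real \<Rightarrow> real) \<Rightarrow> bool" where
  "C2G N f \<longleftrightarrow> contG N f \<and> (\<forall>i<N. C2_half (edge f i))"

definition C2bG :: "nat \<Rightarrow> (nat \<times> real \<Rightarrow> real) \<Rightarrow> bool" where
  "C2bG N f \<longleftrightarrow> C2G N f \<and> (\<forall>i<N. bounded (edge f i ` {0..}) \<and>
      bounded (d1 (edge f i) ` {0..}) \<and> bounded (d2 (edge f i) ` {0..}))"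

definition PC :: "nat \<Rightarrow> (nat \<times> real \<Rightarrow> real) \<Rightarrow> bool" where
  "PC N f \<longleftrightarrow> (\<forall>i<N. bounded ((\<lambda>x. f (i, x)) ` {0<..}) \<and> continuous_on {0<..} (\<lambda>x. f (i, x)) \<and>
      (\<exists>l. ((\<lambda>x. f (i, x)) \<longlongrightarrow> l) (at_right 0)))"

definition Ledge :: "(nat \<times> real \<Rightarrow> real) \<Rightarrow> (nat \<times> real \<Rightarrow> real) \<Rightarrow> (nat \<times> real \<Rightarrow> real)
    \<Rightarrow> nat \<Rightarrow> real \<Rightarrow> real" where
  "Ledge \<sigma> b f i x = (1/2) * (\<sigma> (i, x))\<^sup>2 * d2 (edge f i) x + b (i, x) * d1 (edge f i) x"

definition Lop :: "nat \<Rightarrow> (nat \<times> real \<Rightarrow> real) \<Rightarrow> (nat \<times> real \<Rightarrow> real) \<Rightarrow> (nat \<times> real \<Rightarrow> real)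
    \<Rightarrow> (nat \<times> real \<Rightarrow> real)" where
  "Lop N \<sigma> b f p = (if p = vtx then (THE l. \<forall>i<N. (Ledge \<sigma> b f i \<longlongrightarrow> l) (at_right 0))
                    else Ledge \<sigma> b f (fst p) (snd p))"

definition DL :: "nat \<Rightarrow> (nat \<times> real \<Rightarrow> real) \<Rightarrow> (nat \<times> real \<Rightarrow> real) \<Rightarrow> real \<Rightarrow> (nat \<Rightarrow> real)
    \<Rightarrow> (nat \<times> real \<Rightarrow> real) \<Rightarrow> bool" where
  "DL N \<sigma> b \<eta> \<rho> f \<longleftrightarrow> C2G N f \<and> C0 N f \<and> C0 N (Lop N \<sigma> b f) \<and>
      \<eta> * Lop N \<sigma> b f vtx = (\<Sum>i<N. \<rho> i * d1 (edge f i) 0)"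

definition gnorm :: "nat \<Rightarrow> (nat \<times> real \<Rightarrow> real) \<Rightarrow> real" where
  "gnorm N g = (SUP p\<in>Gamma N. \<bar>g p\<bar>)"

definition strongly_continuous_semigroup ::
  "nat \<Rightarrow> (real \<Rightarrow> (nat \<times> real \<Rightarrow> real) \<Rightarrow> (nat \<times> real \<Rightarrow> real)) \<Rightarrow> bool" where
  "strongly_continuous_semigroup N T \<longleftrightarrow>
     (\<forall>t\<ge>0. \<forall>g. C0 N g \<longrightarrow> C0 N (T t g)) \<and>
     (\<forall>t\<ge>0. \<forall>g h. C0 N g \<longrightarrow> (\<forall>p\<in>Gamma N. g p = h p) \<longrightarrow> (\<forall>p\<in>Gamma N. T t g p = T t h p)) \<and>
     (\<forall>t\<ge>0. \<forall>a c g h. C0 N g \<longrightarrow> C0 N h \<longrightarrow>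
        (\<forall>p\<in>Gamma N. T t (\<lambda>q. a * g q + c * h q) p = a * T t g p + c * T t h p)) \<and>
     (\<forall>t\<ge>0. \<exists>C. \<forall>g. C0 N g \<longrightarrow> gnorm N (T t g) \<le> C * gnorm N g) \<and>
     (\<forall>g. C0 N g \<longrightarrow> (\<forall>p\<in>Gamma N. T 0 g p = g p)) \<and>
     (\<forall>s\<ge>0. \<forall>t\<ge>0. \<forall>g. C0 N g \<longrightarrow> (\<forall>p\<in>Gamma N. T (s + t) g p = T s (T t g) p)) \<and>
     (\<forall>g. C0 N g \<longrightarrow> ((\<lambda>t. gnorm N (\<lambda>p. T t g p - g p)) \<longlongrightarrow> 0) (at_right 0))"

definition has_generator ::
  "nat \<Rightarrow> (real \<Rightarrow> (nat \<times> real \<Rightarrow> real) \<Rightarrow> (nat \<times> real \<Rightarrow> real))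
    \<Rightarrow> ((nat \<times> real \<Rightarrow> real) \<Rightarrow> (nat \<times> real \<Rightarrow> real)) \<Rightarrow> ((nat \<times> real \<Rightarrow> real) \<Rightarrow> bool) \<Rightarrow> bool" where
  "has_generator N T A D \<longleftrightarrow>
     (\<forall>g. C0 N g \<longrightarrow>
        ((\<exists>h. C0 N h \<and> ((\<lambda>t. gnorm N (\<lambda>p. (T t g p - g p) / t - h p)) \<longlongrightarrow> 0) (at_right 0))
           \<longleftrightarrow> D g)) \<and>
     (\<forall>g. C0 N g \<longrightarrow> D g \<longrightarrow>
        ((\<lambda>t. gnorm N (\<lambda>p. (T t g p - g p) / t - A g p)) \<longlongrightarrow> 0) (at_right 0))"

definition continuous_pathG :: "(real \<Rightarrow> nat \<times> real) \<Rightarrow> bool" where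
  "continuous_pathG w \<longleftrightarrow> (\<forall>t\<ge>0. \<forall>e>0. \<exists>d>0. \<forall>s\<ge>0. \<bar>s - t\<bar> < d \<longrightarrow> gdist (w s) (w t) < e)"

definition process_assoc ::
  "nat \<Rightarrow> (real \<Rightarrow> (nat \<times> real \<Rightarrow> real) \<Rightarrow> (nat \<times> real \<Rightarrow> real))
     \<Rightarrow> (nat \<times> real \<Rightarrow> 'a measure) \<Rightarrow> (real \<Rightarrow> 'a \<Rightarrow> nat \<times> real) \<Rightarrow> bool" where
  "process_assoc N T P X \<longleftrightarrow>
     (\<forall>x\<in>Gamma N.
        prob_space (P x) \<and>
        (\<lambda>(s, \<omega>). X s \<omega>) \<in> measurable (restrict_space lborel {0..} \<Otimes>\<^sub>M P x) borel \<and>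
        (\<forall>t\<ge>0. X t \<in> measurable (P x) borel) \<and>
        (\<forall>\<omega>\<in>space (P x). (\<forall>t\<ge>0. X t \<omega> \<in> Gamma N) \<and> continuous_pathG (\<lambda>t. X t \<omega>)) \<and>
        (AE \<omega> in P x. X 0 \<omega> = x) \<and>
        (\<forall>t\<ge>0. \<forall>g. C0 N g \<longrightarrow> (\<integral>\<omega>. g (X t \<omega>) \<partial>P x) = T t g x))"

end

theory Submission
  imports Defs "HOL-Real_Asymp.Real_Asymp"
begin

text \<open>
  The function u is not in the domain of the generator: it need not vanish at infinity, and at the
  vertex it satisfies the boundary condition with the prescribed value \<theta> in place of L u(v).
  On edge i it is approximated by
    u_a(i, x) = u_i(x) exp (-(x/a)^3) + c_i (a x)^2 exp (- a x) / a^2,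
  where c_i = (\<theta> - f_i(0+)) / \<sigma>_i(0+)^2.
  The cutoff makes u_a vanish at infinity without changing u, u' and u'' at the vertex; the
  corrector keeps the value and the slope at the vertex but adds \<theta> - f_i(0+) to the limit of
  L u_a there, which therefore equals \<theta> + lam u(v) along every edge. Hence the boundary condition
  of u turns into the gluing condition of D(L), and u_a belongs to D(L). For w in D(L),
  differentiating exp (- lam t) T_t w(x) and integrating gives
  w(x) = \<integral>_0^\<infinity> exp (- lam s) T_s (lam w - L w)(x) ds, which by Fubini is an expectation along
  the process. As a \<rightarrow> \<infinity>, u_a \<rightarrow> u, while (lam - L) u_a tends to - f off the vertex and to - \<theta>
  at the vertex, with a uniform bound, so dominated convergence gives the representation of u.
\<close>

lemma vtx_in_Gamma [simp]: "vtx \<in> Gamma N"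
  by (simp add: Gamma_def)

lemma Gamma_edge_pointE:
  assumes "p \<in> Gamma N" "p \<noteq> vtx"
  obtains i x where "p = (i, x)" "i < N" "0 < x"
  using assms by (auto simp: Gamma_def)

lemma edge_nonzero [simp]: "x \<noteq> 0 \<Longrightarrow> edge f i x = f (i, x)"
  by (simp add: edge_def)

lemma edge_zero [simp]: "edge f i 0 = f vtx"
  by (simp add: edge_def)

lemma edge_lincomb: "edge (\<lambda>q. a * g q + c * h q) i = (\<lambda>x. a * edge g i x + c * edge h i x)"
  by (auto simp: edge_def)

lemma C0_lincomb: "C0 N g \<Longrightarrow> C0 N h \<Longrightarrow> C0 N (\<lambda>q. a * g q + c * h q)"
  unfolding C0_def contG_def edge_lincomb
  by (auto intro!: continuous_intros tendsto_eq_intros)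

lemma contG_imp_continuous_on_edge:
  assumes "contG N g" "i < N"
  shows "continuous_on {0<..} (\<lambda>x. g (i, x))"
proof -
  have "continuous_on {0<..} (edge g i)"
    using assms unfolding contG_def by (auto intro: continuous_on_subset)
  then show ?thesis
    by (rule continuous_on_cong[THEN iffD1, rotated 2]) auto
qed

lemma bounded_image_atLeast_if_tendsto_at_top:
  fixes g :: "real \<Rightarrow> 'b::metric_space"
  assumes cont: "continuous_on {a..} g" and lim: "(g \<longlongrightarrow> l) at_top"
  shows "bounded (g ` {a..})"
proof -
  have "eventually (\<lambda>x. dist (g x) l < 1) at_top"
    using lim by (simp add: tendsto_iff)
  then obtain R where R: "\<And>x. x \<ge> R \<Longrightarrow> dist (g x) l < 1"
    unfolding eventually_at_top_linorder by blast
  have "bounded (g ` {a..max a R})"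
    by (intro compact_imp_bounded compact_continuous_image continuous_on_subset[OF cont]) auto
  moreover have "bounded (g ` {max a R..})"
    unfolding bounded_def
  proof (intro exI ballI)
    fix y assume "y \<in> g ` {max a R..}"
    then obtain x where "R \<le> x" "y = g x"
      by auto
    then show "dist l y \<le> 1"
      using R[of x] by (simp add: dist_commute)
  qed
  moreover have "{a..} = {a..max a R} \<union> {max a R..}"
    by auto
  ultimately show ?thesis
    by (simp add: image_Un)
qed

lemma C0_abs_bounded:
  assumes "C0 N g"
  obtains B where "\<And>p. p \<in> Gamma N \<Longrightarrow> \<bar>g p\<bar> \<le> B"
proof -
  have "bounded (edge g i ` {0..})" if "i < N" for i
    using assms that unfolding C0_def contG_def
    by (intro bounded_image_atLeast_if_tendsto_at_top[where l = 0]) auto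
  then have "bounded (\<Union>i<N. edge g i ` {0..})"
    by (simp add: bounded_UN)
  moreover have "g ` Gamma N \<subseteq> (\<Union>i<N. edge g i ` {0..}) \<union> {g vtx}"
  proof
    fix y assume "y \<in> g ` Gamma N"
    then obtain p where p: "p \<in> Gamma N" "y = g p" by blast
    show "y \<in> (\<Union>i<N. edge g i ` {0..}) \<union> {g vtx}"
    proof (cases "p = vtx")
      case False
      obtain i x where "p = (i, x)" "i < N" "0 < x"
        using Gamma_edge_pointE[OF p(1) False] .
      then have "y = edge g i x" "x \<in> {0..}"
        using p(2) by auto
      then show ?thesis
        using \<open>i < N\<close> by blast
    qed (use p in simp)
  qed
  ultimately have "bounded (g ` Gamma N)"
    using bounded_subset[OF bounded_insert[THEN iffD2]] by simp
  then show ?thesis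
    using that unfolding bounded_real by blast
qed

lemma abs_le_gnorm:
  assumes "C0 N g" "p \<in> Gamma N"
  shows "\<bar>g p\<bar> \<le> gnorm N g"
proof -
  obtain B where "\<And>p. p \<in> Gamma N \<Longrightarrow> \<bar>g p\<bar> \<le> B"
    using C0_abs_bounded[OF assms(1)] by blast
  then have "bdd_above ((\<lambda>p. \<bar>g p\<bar>) ` Gamma N)"
    by (rule bdd_aboveI2)
  then show ?thesis
    unfolding gnorm_def using assms(2) by (rule cSUP_upper2) auto
qed

lemma gnorm_eq_0:
  assumes "\<And>p. p \<in> Gamma N \<Longrightarrow> g p = 0"
  shows "gnorm N g = 0"
proof -
  have "(\<lambda>p. \<bar>g p\<bar>) ` Gamma N = (\<lambda>p. 0) ` Gamma N"
    using assms by simp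
  also have "\<dots> = {0}"
    using vtx_in_Gamma by blast
  finally show ?thesis
    by (simp add: gnorm_def)
qed

lemma borel_measurable_restrict_Gamma:
  fixes h :: "nat \<times> real \<Rightarrow> real"
  assumes cont: "\<And>i. i < N \<Longrightarrow> continuous_on {0<..} (\<lambda>x. h (i, x))"
  shows "(\<lambda>p. if p \<in> Gamma N then h p else 0) \<in> borel_measurable borel"
proof -
  define on_edge where "on_edge i x = indicator {0<..} x * h (i, x)" for i x
  have eq: "(\<lambda>p. if p \<in> Gamma N then h p else 0) =
      (\<lambda>p. indicator {vtx} p * h vtx + (\<Sum>i<N. indicator {i} (fst p) * on_edge i (snd p)))"
  proof
    fix p :: "nat \<times> real"
    obtain i x where p: "p = (i, x)"
      by (cases p)
    have "(\<Sum>j<N. indicator {j} i * on_edge j x) = (if i < N then on_edge i x else 0)"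
      by (simp add: indicator_def if_distrib sum.delta' cong: if_cong)
    then show "(if p \<in> Gamma N then h p else 0) =
        indicator {vtx} p * h vtx + (\<Sum>i<N. indicator {i} (fst p) * on_edge i (snd p))"
      by (auto simp: p Gamma_def vtx_def on_edge_def indicator_def)
  qed
  have fst: "fst \<in> borel_measurable (borel :: (nat \<times> real) measure)"
    and snd: "snd \<in> borel_measurable (borel :: (nat \<times> real) measure)"
    by (intro borel_measurable_continuous_onI continuous_intros)+
  have "on_edge i \<in> borel_measurable borel" if "i < N" for i
    unfolding on_edge_def[abs_def]
    using borel_measurable_continuous_on_indicator[OF _ cont[OF that]] by simp
  then show ?thesis
    unfolding eq
    by (intro borel_measurable_add borel_measurable_sum borel_measurable_times
        measurable_compose[OF fst] measurable_compose[OF snd] borel_measurable_indicator) auto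
qed

definition edge_lim :: "(nat \<times> real \<Rightarrow> real) \<Rightarrow> nat \<Rightarrow> real" where
  "edge_lim g i = Lim (at_right 0) (\<lambda>x. g (i, x))"

lemma PC_tendsto_edge_lim:
  assumes "PC N g" "i < N"
  shows "((\<lambda>x. g (i, x)) \<longlongrightarrow> edge_lim g i) (at_right 0)"
proof -
  obtain l where "((\<lambda>x. g (i, x)) \<longlongrightarrow> l) (at_right 0)"
    using assms unfolding PC_def by blast
  moreover from this have "edge_lim g i = l"
    unfolding edge_lim_def by (intro tendsto_Lim) auto
  ultimately show ?thesis
    by simp
qed

lemma PC_continuous_on: "PC N g \<Longrightarrow> i < N \<Longrightarrow> continuous_on {0<..} (\<lambda>x. g (i, x))"
  unfolding PC_def by blast

lemma PC_abs_bounded: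
  assumes "PC N g"
  obtains B where "\<And>i x. i < N \<Longrightarrow> 0 < x \<Longrightarrow> \<bar>g (i, x)\<bar> \<le> B"
proof -
  have "bounded (\<Union>i<N. (\<lambda>x. g (i, x)) ` {0<..})"
    using assms unfolding PC_def by (simp add: bounded_UN)
  then show ?thesis
    using that unfolding bounded_real by fastforce
qed

lemma C2bG_abs_bounded:
  assumes "C2bG N u"
  obtains B where "\<And>i x. i < N \<Longrightarrow> 0 \<le> x \<Longrightarrow> \<bar>edge u i x\<bar> \<le> B \<and> \<bar>d1 (edge u i) x\<bar> \<le> B"
proof -
  have "bounded (\<Union>i<N. edge u i ` {0..} \<union> d1 (edge u i) ` {0..})"
    using assms unfolding C2bG_def by (simp add: bounded_UN)
  then show ?thesis
    using that unfolding bounded_real by fastforce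
qed

lemma at_within_Ici_nontrivial:
  fixes x :: real
  assumes "0 \<le> x"
  shows "at x within {0..} \<noteq> bot"
proof -
  have "x islimpt {0..}"
    unfolding islimpt_approachable
  proof (intro allI impI)
    fix e :: real assume "0 < e"
    then show "\<exists>y\<in>{0..}. y \<noteq> x \<and> dist y x < e"
      using assms by (intro bexI[of _ "x + e / 2"]) (auto simp: dist_real_def)
  qed
  then show ?thesis
    using trivial_limit_within by blast
qed

lemma d1_eqI:
  assumes "(g has_real_derivative D) (at x within {0..})" "0 \<le> x"
  shows "d1 g x = D"
  using assms(1) unfolding d1_def has_real_derivative_iff_has_vector_derivative
  by (rule vector_derivative_within[OF at_within_Ici_nontrivial[OF assms(2)]])

lemma d2_eqI:
  assumes g: "\<And>y. 0 \<le> y \<Longrightarrow> (g has_real_derivative g1 y) (at y within {0..})"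
    and g1: "(g1 has_real_derivative D) (at x within {0..})" and x: "0 \<le> x"
  shows "d2 g x = D"
proof -
  have "(d1 g has_real_derivative D) (at x within {0..})"
    by (rule has_field_derivative_transform_within[OF g1 zero_less_one]) (use x d1_eqI[OF g] in auto)
  then show ?thesis
    unfolding d2_def using x by (rule d1_eqI)
qed

lemma C2_halfD:
  assumes "C2_half g"
  shows "continuous_on {0..} g" "continuous_on {0..} (d1 g)" "continuous_on {0..} (d2 g)"
    and "\<And>x. 0 \<le> x \<Longrightarrow> (g has_real_derivative d1 g x) (at x within {0..})"
    and "\<And>x. 0 \<le> x \<Longrightarrow> (d1 g has_real_derivative d2 g x) (at x within {0..})"
proof -
  obtain g1 g2 where cont: "continuous_on {0..} g" "continuous_on {0..} g1" "continuous_on {0..} g2"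
    and g: "\<And>x. 0 \<le> x \<Longrightarrow> (g has_real_derivative g1 x) (at x within {0..})"
    and g1: "\<And>x. 0 \<le> x \<Longrightarrow> (g1 has_real_derivative g2 x) (at x within {0..})"
    using assms unfolding C2_half_def by blast
  have d1: "\<And>x. x \<in> {0..} \<Longrightarrow> d1 g x = g1 x" and d2: "\<And>x. x \<in> {0..} \<Longrightarrow> d2 g x = g2 x"
    using d1_eqI[OF g] d2_eqI[OF g g1] by auto
  show "continuous_on {0..} g"
    by (rule cont(1))
  show "continuous_on {0..} (d1 g)"
    using continuous_on_cong[of "{0..}" "{0..}" "d1 g" g1] cont(2) d1 by blast
  show "continuous_on {0..} (d2 g)"
    using continuous_on_cong[of "{0..}" "{0..}" "d2 g" g2] cont(3) d2 by blast
  show "(g has_real_derivative d1 g x) (at x within {0..})" if "0 \<le> x" for x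
    using g[OF that] d1[of x] that by simp
  show "(d1 g has_real_derivative d2 g x) (at x within {0..})" if x: "0 \<le> x" for x
  proof -
    have "(d1 g has_real_derivative g2 x) (at x within {0..})"
      by (rule has_field_derivative_transform_within[OF g1[OF x] zero_less_one]) (use x d1 in auto)
    then show ?thesis
      using d2 x by simp
  qed
qed

lemma continuous_on_Ici_if_continuous_at_right:
  fixes g :: "real \<Rightarrow> real"
  assumes "continuous_on {0<..} g" "(g \<longlongrightarrow> g 0) (at_right 0)"
  shows "continuous_on {0..} g"
  unfolding continuous_on_eq_continuous_within
proof
  fix x :: real assume x: "x \<in> {0..}"
  show "continuous (at x within {0..}) g"
  proof (cases "x = 0")
    case True
    then show ?thesis
      using assms(2) by (simp add: continuous_within at_within_Ici_at_right)
  next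
    case False
    then have "isCont g x"
      using x by (intro continuous_on_interior[OF assms(1)]) (auto simp: interior_open)
    then show ?thesis
      by (rule continuous_at_imp_continuous_at_within)
  qed
qed

section \<open>Limits and exponentially weighted integrals\<close>

lemma abs_mult_le:
  fixes x y :: "'a::linordered_idom"
  shows "\<bar>x\<bar> \<le> X \<Longrightarrow> \<bar>y\<bar> \<le> Y \<Longrightarrow> \<bar>x * y\<bar> \<le> X * Y"
  by (simp add: abs_mult mult_mono')

lemma tendsto_mult_zero_if_bounded:
  fixes g h :: "'a \<Rightarrow> real"
  assumes "eventually (\<lambda>x. \<bar>g x\<bar> \<le> K) F" "(h \<longlongrightarrow> 0) F"
  shows "((\<lambda>x. g x * h x) \<longlongrightarrow> 0) F"
proof (rule Lim_null_comparison)
  show "eventually (\<lambda>x. norm (g x * h x) \<le> K * \<bar>h x\<bar>) F"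
    using assms(1) by eventually_elim (simp add: abs_mult mult_right_mono)
  show "((\<lambda>x. K * \<bar>h x\<bar>) \<longlongrightarrow> 0) F"
    using tendsto_mult_right_zero[OF tendsto_rabs_zero[OF assms(2)]] .
qed

lemma set_integrable_exp_neg:
  fixes lam :: real
  assumes "0 < lam"
  shows "set_integrable lborel {0..} (\<lambda>s. exp (- lam * s))"
proof -
  have "set_integrable lborel {0<..} (\<lambda>s. exp (- (s * lam)))"
    by (rule integrable_I0i_exp_mscale[OF assms])
  then show ?thesis
    by (subst set_integrable_discrete_difference[where X = "{0}"]) (auto simp: mult.commute)
qed

lemma set_integrable_if_exp_bound:
  fixes H :: "real \<Rightarrow> real"
  assumes cont: "continuous_on {0..} H" and lam: "0 < lam"
    and bound: "\<And>s. 0 \<le> s \<Longrightarrow> \<bar>H s\<bar> \<le> C * exp (- lam * s)"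
  shows "set_integrable lborel {0..} H"
  unfolding set_integrable_def
proof (rule Bochner_Integration.integrable_bound)
  show "integrable lborel (\<lambda>s. indicator {0..} s *\<^sub>R (C * exp (- lam * s)))"
    using set_integrable_mult_right[OF set_integrable_exp_neg[OF lam], of C]
    unfolding set_integrable_def .
  show "(\<lambda>s. indicator {0..} s *\<^sub>R H s) \<in> borel_measurable lborel"
    using borel_measurable_continuous_on_indicator[OF _ cont] by simp
  show "AE s in lborel. norm (indicator {0..} s *\<^sub>R H s) \<le> norm (indicator {0..} s *\<^sub>R (C * exp (- lam * s)))"
    using bound by (intro AE_I2) (force simp: indicator_def)
qed

lemma set_integral_Ici_eq_of_has_derivative:
  fixes E H :: "real \<Rightarrow> real"
  assumes deriv: "\<And>t. a \<le> t \<Longrightarrow> (E has_real_derivative - H t) (at t within {a..})"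
    and cont: "continuous_on {a..} H" and int: "set_integrable lborel {a..} H"
    and lim: "(E \<longlongrightarrow> 0) at_top"
  shows "(LINT s:{a..}|lborel. H s) = E a"
proof -
  have partial: "(LINT s:{a..b}|lborel. H s) = E a - E b" if "a \<le> b" for b
  proof -
    have "(LINT s:{a..b}|lborel. - H s) = E b - E a"
      unfolding set_lebesgue_integral_def using that
      by (intro integral_FTC_atLeastAtMost)
        (auto intro!: continuous_intros continuous_on_subset[OF cont]
          has_vector_derivative_within_subset[OF deriv[unfolded has_real_derivative_iff_has_vector_derivative]])
    then show ?thesis
      by (simp add: set_lebesgue_integral_def)
  qed
  have "((\<lambda>b. E a - E b) \<longlongrightarrow> E a - 0) at_top"
    by (intro tendsto_intros lim)
  moreover have "eventually (\<lambda>b. E a - E b = (LINT s:{a..b}|lborel. H s)) at_top"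
    using eventually_ge_at_top[of a] by eventually_elim (simp add: partial)
  ultimately have "((\<lambda>b. LINT s:{a..b}|lborel. H s) \<longlongrightarrow> E a) at_top"
    by (simp add: tendsto_cong)
  with tendsto_set_lebesgue_integral_at_top[OF _ int] show ?thesis
    using tendsto_unique[OF trivial_limit_at_top_linorder] by auto
qed

lemma integrable_exp_neg_fst:
  fixes lam :: real
  assumes M: "prob_space M" and lam: "0 < lam"
  shows "integrable (restrict_space lborel {0..} \<Otimes>\<^sub>M M) (\<lambda>z. exp (- lam * fst z))"
proof -
  interpret M: prob_space M
    by (rule M)
  interpret pair_sigma_finite "restrict_space lborel ({0..} :: real set)" M
    by (intro pair_sigma_finite.intro sigma_finite_measure_restrict_space sigma_finite_lborel
        prob_space_imp_sigma_finite M) auto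
  show ?thesis
  proof (rule Fubini_integrable)
    show "integrable (restrict_space lborel {0..}) (\<lambda>s. \<integral>\<omega>. norm (exp (- lam * fst (s, \<omega>))) \<partial>M)"
      using set_integrable_exp_neg[OF lam]
      by (simp add: integrable_restrict_space set_integrable_def M.prob_space)
    show "(\<lambda>z. exp (- lam * fst z)) \<in> borel_measurable (restrict_space lborel {0..} \<Otimes>\<^sub>M M)"
      by (intro measurable_compose[OF measurable_fst] measurable_restrict_space1) measurable
  qed simp
qed

section \<open>The process and its semigroup\<close>

locale star_process =
  fixes N :: nat and T :: "real \<Rightarrow> (nat \<times> real \<Rightarrow> real) \<Rightarrow> (nat \<times> real \<Rightarrow> real)"
    and P :: "nat \<times> real \<Rightarrow> 'a measure" and X :: "real \<Rightarrow> 'a \<Rightarrow> nat \<times> real"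
  assumes semigroup: "strongly_continuous_semigroup N T"
    and process: "process_assoc N T P X"
begin

lemma T_C0: "0 \<le> t \<Longrightarrow> C0 N g \<Longrightarrow> C0 N (T t g)"
  using semigroup by (simp add: strongly_continuous_semigroup_def)

lemma T_lincomb:
  "0 \<le> t \<Longrightarrow> C0 N g \<Longrightarrow> C0 N h \<Longrightarrow> p \<in> Gamma N \<Longrightarrow>
    T t (\<lambda>q. a * g q + c * h q) p = a * T t g p + c * T t h p"
  using semigroup by (simp add: strongly_continuous_semigroup_def)

lemma T_0: "C0 N g \<Longrightarrow> p \<in> Gamma N \<Longrightarrow> T 0 g p = g p"
  using semigroup by (simp add: strongly_continuous_semigroup_def)

lemma T_add: "0 \<le> s \<Longrightarrow> 0 \<le> t \<Longrightarrow> C0 N g \<Longrightarrow> p \<in> Gamma N \<Longrightarrow> T (s + t) g p = T s (T t g) p"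
  using semigroup by (simp add: strongly_continuous_semigroup_def)

lemma T_strongly_continuous: "C0 N g \<Longrightarrow> ((\<lambda>t. gnorm N (\<lambda>p. T t g p - g p)) \<longlongrightarrow> 0) (at_right 0)"
  using semigroup by (simp add: strongly_continuous_semigroup_def)

lemma prob_space_P: "x \<in> Gamma N \<Longrightarrow> prob_space (P x)"
  using process by (simp add: process_assoc_def)

lemma X_measurable: "x \<in> Gamma N \<Longrightarrow> 0 \<le> t \<Longrightarrow> X t \<in> measurable (P x) borel"
  using process by (simp add: process_assoc_def)

lemma X_joint_measurable:
  "x \<in> Gamma N \<Longrightarrow> (\<lambda>(s, \<omega>). X s \<omega>) \<in> measurable (restrict_space lborel {0..} \<Otimes>\<^sub>M P x) borel"
  using process by (simp add: process_assoc_def)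

lemma X_in_Gamma: "x \<in> Gamma N \<Longrightarrow> \<omega> \<in> space (P x) \<Longrightarrow> 0 \<le> t \<Longrightarrow> X t \<omega> \<in> Gamma N"
  using process by (simp add: process_assoc_def)

lemma integral_X_eq_T: "x \<in> Gamma N \<Longrightarrow> 0 \<le> t \<Longrightarrow> C0 N g \<Longrightarrow> (\<integral>\<omega>. g (X t \<omega>) \<partial>P x) = T t g x"
  using process by (simp add: process_assoc_def)

lemma measurable_comp_X:
  fixes h :: "nat \<times> real \<Rightarrow> real"
  assumes x: "x \<in> Gamma N" and t: "0 \<le> t"
    and h: "\<And>i. i < N \<Longrightarrow> continuous_on {0<..} (\<lambda>y. h (i, y))"
  shows "(\<lambda>\<omega>. h (X t \<omega>)) \<in> borel_measurable (P x)"
proof -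
  have "(\<lambda>\<omega>. (\<lambda>p. if p \<in> Gamma N then h p else 0) (X t \<omega>)) \<in> borel_measurable (P x)"
    by (rule measurable_compose[OF X_measurable[OF x t] borel_measurable_restrict_Gamma[OF h]])
  then show ?thesis
    by (rule measurable_cong[THEN iffD1, rotated]) (simp add: X_in_Gamma[OF x _ t])
qed

lemma abs_T_le_gnorm:
  assumes x: "x \<in> Gamma N" and t: "0 \<le> t" and g: "C0 N g"
  shows "\<bar>T t g x\<bar> \<le> gnorm N g"
proof -
  interpret prob_space "P x"
    by (rule prob_space_P[OF x])
  have bound: "\<bar>g (X t \<omega>)\<bar> \<le> gnorm N g" if "\<omega> \<in> space (P x)" for \<omega>
    using abs_le_gnorm[OF g] X_in_Gamma[OF x that t] by blast
  have "(\<lambda>\<omega>. g (X t \<omega>)) \<in> borel_measurable (P x)"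
    using g unfolding C0_def by (intro measurable_comp_X[OF x t] contG_imp_continuous_on_edge) auto
  then have int: "integrable (P x) (\<lambda>\<omega>. g (X t \<omega>))"
    using bound by (intro integrable_const_bound[where B = "gnorm N g"] AE_I2) auto
  have "(\<integral>\<omega>. g (X t \<omega>) \<partial>P x) \<le> gnorm N g"
    using bound by (intro integral_le_const[OF int] AE_I2) (auto simp: abs_le_iff)
  moreover have "- gnorm N g \<le> (\<integral>\<omega>. g (X t \<omega>) \<partial>P x)"
    using bound by (intro integral_ge_const[OF int] AE_I2) (force simp: abs_le_iff)
  ultimately show ?thesis
    using integral_X_eq_T[OF x t g] by auto
qed

lemma abs_T_diff_le:
  assumes x: "x \<in> Gamma N" and st: "0 \<le> s" "s \<le> t" and g: "C0 N g"
  shows "\<bar>T t g x - T s g x\<bar> \<le> gnorm N (\<lambda>q. T (t - s) g q - g q)"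
proof -
  have g': "C0 N (T (t - s) g)"
    using T_C0 st g by simp
  have "T t g x - T s g x = T s (\<lambda>q. 1 * T (t - s) g q + (-1) * g q) x"
    using T_add[of s "t - s" g x] T_lincomb[OF st(1) g' g x, of 1 "-1"] st g x by simp
  also have "\<bar>\<dots>\<bar> \<le> gnorm N (\<lambda>q. 1 * T (t - s) g q + (-1) * g q)"
    by (rule abs_T_le_gnorm[OF x st(1) C0_lincomb[OF g' g]])
  finally show ?thesis
    by simp
qed

lemma continuous_on_T:
  assumes x: "x \<in> Gamma N" and g: "C0 N g"
  shows "continuous_on {0..} (\<lambda>t. T t g x)"
  unfolding continuous_on_iff
proof (intro ballI allI impI)
  fix t e :: real assume t: "t \<in> {0..}" and e: "0 < e"
  have "eventually (\<lambda>r. gnorm N (\<lambda>q. T r g q - g q) < e) (at_right 0)"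
    using order_tendstoD(2)[OF T_strongly_continuous[OF g] e] .
  then obtain d where d: "0 < d" "\<And>r. 0 < r \<Longrightarrow> r < d \<Longrightarrow> gnorm N (\<lambda>q. T r g q - g q) < e"
    by (auto simp: eventually_at_right_field)
  have small: "gnorm N (\<lambda>q. T r g q - g q) < e" if "0 \<le> r" "r < d" for r
  proof (cases "r = 0")
    case True
    then show ?thesis
      using e by (simp add: gnorm_eq_0 T_0[OF g])
  qed (use d that in auto)
  show "\<exists>d>0. \<forall>s\<in>{0..}. dist s t < d \<longrightarrow> dist (T s g x) (T t g x) < e"
  proof (intro exI[of _ d] conjI ballI impI d(1))
    fix s :: real assume s: "s \<in> {0..}" "dist s t < d"
    show "dist (T s g x) (T t g x) < e"
    proof (cases "s \<le> t")
      case True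
      then show ?thesis
        using abs_T_diff_le[OF x _ True g] small[of "t - s"] s
        by (auto simp: dist_real_def abs_minus_commute)
    next
      case False
      then show ?thesis
        using abs_T_diff_le[OF x _ _ g, of t s] small[of "s - t"] s t
        by (auto simp: dist_real_def)
    qed
  qed
qed

lemma abs_T_difference_quotient_le:
  assumes x: "x \<in> Gamma N" and s: "0 \<le> s" and r: "0 < r" and w: "C0 N w" and Aw: "C0 N Aw"
  shows "\<bar>(T (s + r) w x - T s w x) / r - T s Aw x\<bar> \<le> gnorm N (\<lambda>p. (T r w p - w p) / r - Aw p)"
proof -
  have w': "C0 N (T r w)"
    using T_C0 r w by simp
  define D where "D q = (1 / r) * T r w q + (- 1 / r) * w q" for q
  have D: "C0 N D"
    unfolding D_def[abs_def] by (rule C0_lincomb[OF w' w])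
  have quotient: "(\<lambda>p. (T r w p - w p) / r - Aw p) = (\<lambda>q. 1 * D q + (-1) * Aw q)"
    by (auto simp: D_def diff_divide_distrib)
  have "T s (\<lambda>q. 1 * D q + (-1) * Aw q) x = (T (s + r) w x - T s w x) / r - T s Aw x"
    using T_lincomb[OF s D Aw x, of 1 "-1"] T_lincomb[OF s w' w x, of "1 / r" "- 1 / r"]
      T_add[OF s _ w x, of r] r by (simp add: D_def[abs_def] diff_divide_distrib)
  moreover have "\<bar>T s (\<lambda>q. 1 * D q + (-1) * Aw q) x\<bar> \<le> gnorm N (\<lambda>q. 1 * D q + (-1) * Aw q)"
    by (rule abs_T_le_gnorm[OF x s C0_lincomb[OF D Aw]])
  ultimately show ?thesis
    unfolding quotient by simp
qed

lemma T_has_derivative: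
  assumes x: "x \<in> Gamma N" and t: "0 \<le> t" and w: "C0 N w" and Aw: "C0 N Aw"
    and generator: "((\<lambda>r. gnorm N (\<lambda>p. (T r w p - w p) / r - Aw p)) \<longlongrightarrow> 0) (at_right 0)"
  shows "((\<lambda>s. T s w x) has_real_derivative T t Aw x) (at t within {0..})"
  unfolding has_field_derivative_iff tendsto_iff eventually_at
proof (intro allI impI)
  fix e :: real assume e: "0 < e"
  have "eventually (\<lambda>r. gnorm N (\<lambda>p. (T r w p - w p) / r - Aw p) < e / 2) (at_right 0)"
    using e by (intro order_tendstoD(2)[OF generator]) simp
  then obtain d1 where d1: "0 < d1"
    "\<And>r. 0 < r \<Longrightarrow> r < d1 \<Longrightarrow> gnorm N (\<lambda>p. (T r w p - w p) / r - Aw p) < e / 2"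
    by (auto simp: eventually_at_right_field)
  obtain d2 where d2: "0 < d2"
    "\<And>s. s \<in> {0..} \<Longrightarrow> dist s t < d2 \<Longrightarrow> dist (T s Aw x) (T t Aw x) < e / 2"
    using continuous_on_T[OF x Aw] t e unfolding continuous_on_iff by (metis atLeast_iff half_gt_zero)
  txt \<open>A left difference quotient at t is a right one at t - r; this is where the continuity
    of s \<mapsto> T s Aw x enters.\<close>
  have quotient: "\<bar>(T (s + r) w x - T s w x) / r - T s Aw x\<bar> < e / 2"
    if "0 \<le> s" "0 < r" "r < d1" for s r
    using abs_T_difference_quotient_le[OF x that(1,2) w Aw] d1(2)[OF that(2,3)] by linarith
  show "\<exists>d>0. \<forall>s\<in>{0..}. s \<noteq> t \<and> dist s t < d \<longrightarrow>
      dist ((T s w x - T t w x) / (s - t)) (T t Aw x) < e"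
  proof (intro exI[of _ "min d1 d2"] conjI ballI impI)
    show "0 < min d1 d2"
      using d1 d2 by simp
    fix s :: real assume s: "s \<in> {0..}" "s \<noteq> t \<and> dist s t < min d1 d2"
    show "dist ((T s w x - T t w x) / (s - t)) (T t Aw x) < e"
    proof (cases "t < s")
      case True
      then show ?thesis
        using quotient[OF t, of "s - t"] s e by (auto simp: dist_real_def)
    next
      case False
      then have "\<bar>(T t w x - T s w x) / (t - s) - T s Aw x\<bar> < e / 2"
        using quotient[of s "t - s"] s by (auto simp: dist_real_def)
      moreover have "\<bar>T s Aw x - T t Aw x\<bar> < e / 2"
        using d2(2)[OF s(1)] s by (simp add: dist_real_def)
      moreover have "(T s w x - T t w x) / (s - t) = (T t w x - T s w x) / (t - s)"
        by (metis minus_diff_eq minus_divide_divide)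
      ultimately show ?thesis
        unfolding dist_real_def abs_less_iff by linarith
    qed
  qed
qed

lemma discounted_T_has_derivative:
  assumes x: "x \<in> Gamma N" and t: "0 \<le> t" and w: "C0 N w" and Aw: "C0 N Aw"
    and generator: "((\<lambda>r. gnorm N (\<lambda>p. (T r w p - w p) / r - Aw p)) \<longlongrightarrow> 0) (at_right 0)"
  shows "((\<lambda>t. exp (- lam * t) * T t w x) has_real_derivative
    - (exp (- lam * t) * T t (\<lambda>q. lam * w q - Aw q) x)) (at t within {0..})"
proof -
  have Th: "T t (\<lambda>q. lam * w q - Aw q) x = lam * T t w x - T t Aw x"
    using T_lincomb[OF t w Aw x, of lam "-1"] by simp
  have "((\<lambda>t. exp (- lam * t) * T t w x) has_real_derivative
      exp (- lam * t) * (- lam) * T t w x + exp (- lam * t) * T t Aw x) (at t within {0..})"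
    by (auto intro!: derivative_eq_intros T_has_derivative[OF x t w Aw generator])
  also have "exp (- lam * t) * (- lam) * T t w x + exp (- lam * t) * T t Aw x
      = - (exp (- lam * t) * T t (\<lambda>q. lam * w q - Aw q) x)"
    unfolding Th by (simp add: algebra_simps)
  finally show ?thesis .
qed

lemma resolvent_identity:
  assumes x: "x \<in> Gamma N" and lam: "0 < lam" and w: "C0 N w" and Aw: "C0 N Aw"
    and generator: "((\<lambda>r. gnorm N (\<lambda>p. (T r w p - w p) / r - Aw p)) \<longlongrightarrow> 0) (at_right 0)"
  shows "(LINT s:{0..}|lborel. exp (- lam * s) * T s (\<lambda>q. lam * w q - Aw q) x) = w x"
proof -
  define h where "h = (\<lambda>q. lam * w q - Aw q)"
  have h: "C0 N h"
    using C0_lincomb[OF w Aw, of lam "-1"] by (simp add: h_def)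
  have cont: "continuous_on {0..} (\<lambda>s. exp (- lam * s) * T s h x)"
    by (intro continuous_intros continuous_on_T[OF x h])
  have "set_integrable lborel {0..} (\<lambda>s. exp (- lam * s) * T s h x)"
    using abs_T_le_gnorm[OF x _ h]
    by (intro set_integrable_if_exp_bound[OF cont lam, of "gnorm N h"])
      (simp add: abs_mult mult.commute mult_left_mono)
  moreover have "((\<lambda>t. exp (- lam * t) * T t w x) \<longlongrightarrow> 0) at_top"
  proof (rule Lim_null_comparison)
    show "eventually (\<lambda>t. norm (exp (- lam * t) * T t w x) \<le> gnorm N w * exp (- lam * t)) at_top"
      using eventually_ge_at_top[of 0]
    proof eventually_elim
      case (elim t)
      then show ?case
        using abs_T_le_gnorm[OF x elim w] by (simp add: abs_mult mult.commute mult_left_mono)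
    qed
    have "((\<lambda>t. exp (- lam * t)) \<longlongrightarrow> 0) at_top"
      using lam by real_asymp
    then show "((\<lambda>t. gnorm N w * exp (- lam * t)) \<longlongrightarrow> 0) at_top"
      by (rule tendsto_mult_right_zero)
  qed
  ultimately have "(LINT s:{0..}|lborel. exp (- lam * s) * T s h x) = exp (- lam * 0) * T 0 w x"
    using discounted_T_has_derivative[OF x _ w Aw generator] cont unfolding h_def
    by (intro set_integral_Ici_eq_of_has_derivative) auto
  then show ?thesis
    by (simp add: h_def T_0[OF w x])
qed

abbreviation time_sample_space :: "nat \<times> real \<Rightarrow> (real \<times> 'a) measure" where
  "time_sample_space x \<equiv> restrict_space lborel {0..} \<Otimes>\<^sub>M P x"

lemma pair_sigma_finite_time_sample_space:
  "x \<in> Gamma N \<Longrightarrow> pair_sigma_finite (restrict_space lborel ({0..} :: real set)) (P x)"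
  by (intro pair_sigma_finite.intro sigma_finite_measure_restrict_space sigma_finite_lborel
      prob_space_imp_sigma_finite prob_space_P) auto

lemma space_time_sample_space:
  "x \<in> Gamma N \<Longrightarrow> z \<in> space (time_sample_space x) \<Longrightarrow> 0 \<le> fst z \<and> X (fst z) (snd z) \<in> Gamma N"
  by (auto simp: space_pair_measure space_restrict_space intro: X_in_Gamma)

lemma measurable_comp_X_joint:
  fixes h :: "nat \<times> real \<Rightarrow> real"
  assumes x: "x \<in> Gamma N" and h: "\<And>i. i < N \<Longrightarrow> continuous_on {0<..} (\<lambda>y. h (i, y))"
  shows "(\<lambda>z. h (X (fst z) (snd z))) \<in> borel_measurable (time_sample_space x)"
proof -
  have "(\<lambda>z. (\<lambda>p. if p \<in> Gamma N then h p else 0) ((\<lambda>(s, \<omega>). X s \<omega>) z))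
      \<in> borel_measurable (time_sample_space x)"
    by (rule measurable_compose[OF X_joint_measurable[OF x] borel_measurable_restrict_Gamma[OF h]])
  then show ?thesis
    by (rule measurable_cong[THEN iffD1, rotated]) (simp add: space_time_sample_space[OF x] case_prod_beta)
qed

lemma integrable_discounted:
  fixes g :: "nat \<times> real \<Rightarrow> real"
  assumes x: "x \<in> Gamma N" and lam: "0 < lam"
    and g: "\<And>i. i < N \<Longrightarrow> continuous_on {0<..} (\<lambda>y. g (i, y))"
    and bound: "\<And>p. p \<in> Gamma N \<Longrightarrow> \<bar>g p\<bar> \<le> B"
  shows "integrable (time_sample_space x) (\<lambda>z. exp (- lam * fst z) * g (X (fst z) (snd z)))"
proof (rule Bochner_Integration.integrable_bound)
  show "integrable (time_sample_space x) (\<lambda>z. B * exp (- lam * fst z))"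
    by (intro integrable_mult_right integrable_exp_neg_fst prob_space_P x lam)
  show "(\<lambda>z. exp (- lam * fst z) * g (X (fst z) (snd z))) \<in> borel_measurable (time_sample_space x)"
    by (intro borel_measurable_times measurable_comp_X_joint[OF x g]
        measurable_compose[OF measurable_fst]) (auto simp: measurable_restrict_space1)
  show "AE z in time_sample_space x. norm (exp (- lam * fst z) * g (X (fst z) (snd z)))
      \<le> norm (B * exp (- lam * fst z))"
  proof (rule AE_I2)
    fix z assume "z \<in> space (time_sample_space x)"
    then have "\<bar>g (X (fst z) (snd z))\<bar> \<le> \<bar>B\<bar>"
      using bound space_time_sample_space[OF x] abs_ge_self order_trans by blast
    then show "norm (exp (- lam * fst z) * g (X (fst z) (snd z))) \<le> norm (B * exp (- lam * fst z))"
      by (simp add: abs_mult mult.commute mult_right_mono)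
  qed
qed

lemma integral_discounted_eq_resolvent:
  assumes x: "x \<in> Gamma N" and lam: "0 < lam" and h: "C0 N h"
  shows "(\<integral>z. exp (- lam * fst z) * h (X (fst z) (snd z)) \<partial>time_sample_space x)
    = (LINT s:{0..}|lborel. exp (- lam * s) * T s h x)"
proof -
  interpret pair_sigma_finite "restrict_space lborel ({0..} :: real set)" "P x"
    by (rule pair_sigma_finite_time_sample_space[OF x])
  obtain B where "\<And>p. p \<in> Gamma N \<Longrightarrow> \<bar>h p\<bar> \<le> B"
    using C0_abs_bounded[OF h] by blast
  then have int: "integrable (time_sample_space x) (\<lambda>z. exp (- lam * fst z) * h (X (fst z) (snd z)))"
    using h unfolding C0_def by (intro integrable_discounted[OF x lam] contG_imp_continuous_on_edge) auto
  have "(\<integral>z. exp (- lam * fst z) * h (X (fst z) (snd z)) \<partial>time_sample_space x)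
      = (\<integral>s. (\<integral>\<omega>. exp (- lam * s) * h (X s \<omega>) \<partial>P x) \<partial>restrict_space lborel {0..})"
    using integral_fst'[OF int] by simp
  also have "\<dots> = (\<integral>s. exp (- lam * s) * T s h x \<partial>restrict_space lborel {0..})"
    by (intro Bochner_Integration.integral_cong)
      (auto simp: space_restrict_space integral_X_eq_T[OF x _ h])
  also have "\<dots> = (LINT s:{0..}|lborel. exp (- lam * s) * T s h x)"
    by (simp add: integral_restrict_space set_lebesgue_integral_def)
  finally show ?thesis .
qed

lemma integral_time_sample_space_eq_iterated:
  fixes g :: "real \<Rightarrow> 'a \<Rightarrow> real"
  assumes x: "x \<in> Gamma N" and int: "integrable (time_sample_space x) (\<lambda>z. g (fst z) (snd z))"
  shows "(\<integral>z. g (fst z) (snd z) \<partial>time_sample_space x) = (\<integral>\<omega>. (LINT s:{0..}|lborel. g s \<omega>) \<partial>P x)"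
proof -
  interpret pair_sigma_finite "restrict_space lborel ({0..} :: real set)" "P x"
    by (rule pair_sigma_finite_time_sample_space[OF x])
  have "(\<integral>z. g (fst z) (snd z) \<partial>time_sample_space x) = integral\<^sup>L (time_sample_space x) (case_prod g)"
    by (simp add: case_prod_beta')
  also have "\<dots> = (\<integral>\<omega>. (\<integral>s. g s \<omega> \<partial>restrict_space lborel {0..}) \<partial>P x)"
    using int by (intro integral_snd[symmetric]) (simp add: case_prod_beta')
  also have "\<dots> = (\<integral>\<omega>. (LINT s:{0..}|lborel. g s \<omega>) \<partial>P x)"
    by (simp add: integral_restrict_space set_lebesgue_integral_def)
  finally show ?thesis .
qed

lemma discounted_dominated_convergence:
  fixes h :: "nat \<Rightarrow> nat \<times> real \<Rightarrow> real" and F :: "nat \<times> real \<Rightarrow> real"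
  assumes x: "x \<in> Gamma N" and lam: "0 < lam"
    and h: "\<And>n i. i < N \<Longrightarrow> continuous_on {0<..} (\<lambda>y. h n (i, y))"
    and F: "\<And>i. i < N \<Longrightarrow> continuous_on {0<..} (\<lambda>y. F (i, y))"
    and lim: "\<And>p. p \<in> Gamma N \<Longrightarrow> (\<lambda>n. h n p) \<longlonglongrightarrow> - F p"
    and bound: "\<And>n p. p \<in> Gamma N \<Longrightarrow> \<bar>h n p\<bar> \<le> B"
  shows "(\<lambda>n. \<integral>z. exp (- lam * fst z) * h n (X (fst z) (snd z)) \<partial>time_sample_space x)
    \<longlonglongrightarrow> - (\<integral>\<omega>. (LINT s:{0..}|lborel. F (X s \<omega>) * exp (- lam * s)) \<partial>P x)"
proof -
  define G where "G n z = exp (- lam * fst z) * h n (X (fst z) (snd z))" for n z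
  define G_lim where "G_lim z = - (F (X (fst z) (snd z)) * exp (- lam * fst z))" for z
  have G: "G n \<in> borel_measurable (time_sample_space x)" for n
    unfolding G_def using integrable_discounted[OF x lam h bound] by blast
  have G_lim: "G_lim \<in> borel_measurable (time_sample_space x)"
    unfolding G_lim_def
    by (intro borel_measurable_times borel_measurable_uminus measurable_comp_X_joint[OF x F]
        measurable_compose[OF measurable_fst]) (auto simp: measurable_restrict_space1)
  have dominating: "integrable (time_sample_space x) (\<lambda>z. \<bar>B\<bar> * exp (- lam * fst z))"
    by (intro integrable_mult_right integrable_exp_neg_fst prob_space_P x lam)
  have "AE z in time_sample_space x. (\<lambda>n. G n z) \<longlonglongrightarrow> G_lim z"
  proof (rule AE_I2)
    fix z assume "z \<in> space (time_sample_space x)"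
    then have "(\<lambda>n. exp (- lam * fst z) * h n (X (fst z) (snd z)))
        \<longlonglongrightarrow> exp (- lam * fst z) * - F (X (fst z) (snd z))"
      using lim space_time_sample_space[OF x] by (intro tendsto_mult_left) simp
    then show "(\<lambda>n. G n z) \<longlonglongrightarrow> G_lim z"
      by (simp add: G_def G_lim_def mult.commute)
  qed
  moreover have "AE z in time_sample_space x. norm (G n z) \<le> \<bar>B\<bar> * exp (- lam * fst z)" for n
  proof (rule AE_I2)
    fix z assume "z \<in> space (time_sample_space x)"
    then have "\<bar>h n (X (fst z) (snd z))\<bar> \<le> \<bar>B\<bar>"
      using bound space_time_sample_space[OF x] abs_ge_self order_trans by blast
    then show "norm (G n z) \<le> \<bar>B\<bar> * exp (- lam * fst z)"
      by (simp add: G_def abs_mult mult.commute mult_right_mono)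
  qed
  ultimately have "integrable (time_sample_space x) G_lim"
    and "(\<lambda>n. integral\<^sup>L (time_sample_space x) (G n)) \<longlonglongrightarrow> integral\<^sup>L (time_sample_space x) G_lim"
    using integrable_dominated_convergence[where s = G, OF G_lim G dominating]
      integral_dominated_convergence[where s = G, OF G_lim G dominating] by blast+
  then show ?thesis
    using integral_time_sample_space_eq_iterated[OF x, of "\<lambda>s \<omega>. F (X s \<omega>) * exp (- lam * s)"]
    by (simp add: G_def[abs_def] G_lim_def[abs_def])
qed

lemma representation_by_resolvent_approximation:
  fixes w Aw :: "nat \<Rightarrow> nat \<times> real \<Rightarrow> real" and F :: "nat \<times> real \<Rightarrow> real"
  assumes x: "x \<in> Gamma N" and lam: "0 < lam"
    and w: "\<And>n. C0 N (w n)" and Aw: "\<And>n. C0 N (Aw n)"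
    and generator: "\<And>n. ((\<lambda>r. gnorm N (\<lambda>p. (T r (w n) p - w n p) / r - Aw n p)) \<longlongrightarrow> 0) (at_right 0)"
    and F: "\<And>i. i < N \<Longrightarrow> continuous_on {0<..} (\<lambda>y. F (i, y))"
    and lim: "\<And>p. p \<in> Gamma N \<Longrightarrow> (\<lambda>n. lam * w n p - Aw n p) \<longlonglongrightarrow> - F p"
    and bound: "\<And>n p. p \<in> Gamma N \<Longrightarrow> \<bar>lam * w n p - Aw n p\<bar> \<le> B"
    and w_lim: "(\<lambda>n. w n x) \<longlonglongrightarrow> v"
  shows "v = - (\<integral>\<omega>. (LINT s:{0..}|lborel. F (X s \<omega>) * exp (- lam * s)) \<partial>P x)"
proof -
  have h: "C0 N (\<lambda>q. lam * w n q - Aw n q)" for n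
    using C0_lincomb[OF w[of n] Aw[of n], of lam "-1"] by simp
  have "w n x = (\<integral>z. exp (- lam * fst z) * (lam * w n (X (fst z) (snd z)) - Aw n (X (fst z) (snd z)))
      \<partial>time_sample_space x)" for n
    using integral_discounted_eq_resolvent[OF x lam h] resolvent_identity[OF x lam w Aw generator] by simp
  moreover have "(\<lambda>n. \<integral>z. exp (- lam * fst z) * (lam * w n (X (fst z) (snd z)) - Aw n (X (fst z) (snd z)))
      \<partial>time_sample_space x) \<longlonglongrightarrow> - (\<integral>\<omega>. (LINT s:{0..}|lborel. F (X s \<omega>) * exp (- lam * s)) \<partial>P x)"
    using h unfolding C0_def
    by (intro discounted_dominated_convergence[OF x lam _ F lim bound] contG_imp_continuous_on_edge) auto
  ultimately show ?thesis
    using LIMSEQ_unique[OF w_lim] by simp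
qed

end

section \<open>Cutoff and corrector profiles\<close>

definition cutoff :: "real \<Rightarrow> real" where
  "cutoff z = exp (- (z ^ 3))"

definition cutoff' :: "real \<Rightarrow> real" where
  "cutoff' z = - 3 * z ^ 2 * exp (- (z ^ 3))"

definition cutoff'' :: "real \<Rightarrow> real" where
  "cutoff'' z = (9 * z ^ 4 - 6 * z) * exp (- (z ^ 3))"

definition corrector :: "real \<Rightarrow> real" where
  "corrector y = y ^ 2 * exp (- y)"

definition corrector' :: "real \<Rightarrow> real" where
  "corrector' y = (2 * y - y ^ 2) * exp (- y)"

definition corrector'' :: "real \<Rightarrow> real" where
  "corrector'' y = (2 - 4 * y + y ^ 2) * exp (- y)"

lemma DERIV_cutoff: "DERIV cutoff z :> cutoff' z"
  and DERIV_cutoff': "DERIV cutoff' z :> cutoff'' z"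
  and DERIV_corrector: "DERIV corrector z :> corrector' z"
  and DERIV_corrector': "DERIV corrector' z :> corrector'' z"
  unfolding cutoff_def cutoff'_def cutoff''_def corrector_def corrector'_def corrector''_def
  by (auto intro!: derivative_eq_intros simp: algebra_simps power2_eq_square power3_eq_cube power4_eq_xxxx)

declare DERIV_cutoff[THEN DERIV_chain2, derivative_intros]
  DERIV_cutoff'[THEN DERIV_chain2, derivative_intros]
  DERIV_corrector[THEN DERIV_chain2, derivative_intros]
  DERIV_corrector'[THEN DERIV_chain2, derivative_intros]

lemma continuous_on_shapes [continuous_intros]:
  assumes "continuous_on S g"
  shows "continuous_on S (\<lambda>x. cutoff (g x))" "continuous_on S (\<lambda>x. cutoff' (g x))"
    "continuous_on S (\<lambda>x. cutoff'' (g x))" "continuous_on S (\<lambda>x. corrector (g x))"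
    "continuous_on S (\<lambda>x. corrector' (g x))" "continuous_on S (\<lambda>x. corrector'' (g x))"
  unfolding cutoff_def cutoff'_def cutoff''_def corrector_def corrector'_def corrector''_def
  by (intro continuous_intros assms)+

lemma isCont_shapes:
  "isCont cutoff z" "isCont cutoff' z" "isCont cutoff'' z"
  "isCont corrector z" "isCont corrector' z" "isCont corrector'' z"
  using continuous_on_shapes[OF continuous_on_id, of UNIV]
  by (simp_all add: continuous_on_eq_continuous_at)

lemma shapes_at_0 [simp]:
  "cutoff 0 = 1" "cutoff' 0 = 0" "cutoff'' 0 = 0" "corrector 0 = 0" "corrector' 0 = 0" "corrector'' 0 = 2"
  by (simp_all add: cutoff_def cutoff'_def cutoff''_def corrector_def corrector'_def corrector''_def)

lemma shapes_tendsto_at_top: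
  "(cutoff \<longlongrightarrow> 0) at_top" "(cutoff' \<longlongrightarrow> 0) at_top" "(cutoff'' \<longlongrightarrow> 0) at_top"
  "(corrector \<longlongrightarrow> 0) at_top" "(corrector' \<longlongrightarrow> 0) at_top" "(corrector'' \<longlongrightarrow> 0) at_top"
  unfolding cutoff_def cutoff'_def cutoff''_def corrector_def corrector'_def corrector''_def
  by real_asymp+

lemma shapes_bounded:
  obtains C where "\<And>z. 0 \<le> z \<Longrightarrow> \<bar>cutoff z\<bar> \<le> C \<and> \<bar>cutoff' z\<bar> \<le> C \<and> \<bar>cutoff'' z\<bar> \<le> C
    \<and> \<bar>corrector z\<bar> \<le> C \<and> \<bar>corrector' z\<bar> \<le> C \<and> \<bar>corrector'' z\<bar> \<le> C"
proof -
  have "bounded ((\<lambda>z. \<bar>cutoff z\<bar> + \<bar>cutoff' z\<bar> + \<bar>cutoff'' z\<bar>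
      + \<bar>corrector z\<bar> + \<bar>corrector' z\<bar> + \<bar>corrector'' z\<bar>) ` {0..})"
    by (intro bounded_image_atLeast_if_tendsto_at_top[where l = 0] continuous_intros continuous_on_id
        tendsto_add_zero tendsto_rabs_zero shapes_tendsto_at_top)
  then obtain C where "\<And>z. 0 \<le> z \<Longrightarrow> \<bar>\<bar>cutoff z\<bar> + \<bar>cutoff' z\<bar> + \<bar>cutoff'' z\<bar>
      + \<bar>corrector z\<bar> + \<bar>corrector' z\<bar> + \<bar>corrector'' z\<bar>\<bar> \<le> C"
    unfolding bounded_real by auto
  then show ?thesis
    by (intro that[of C]) fastforce
qed

lemma shapes_scaled_tendsto_at_top:
  fixes a :: real
  assumes "0 < a"
  shows "((\<lambda>x. cutoff (x / a)) \<longlongrightarrow> 0) at_top" "((\<lambda>x. cutoff' (x / a)) \<longlongrightarrow> 0) at_top"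
    "((\<lambda>x. cutoff'' (x / a)) \<longlongrightarrow> 0) at_top" "((\<lambda>x. corrector (a * x)) \<longlongrightarrow> 0) at_top"
    "((\<lambda>x. corrector' (a * x)) \<longlongrightarrow> 0) at_top" "((\<lambda>x. corrector'' (a * x)) \<longlongrightarrow> 0) at_top"
  unfolding cutoff_def cutoff'_def cutoff''_def corrector_def corrector'_def corrector''_def
  using assms by real_asymp+

lemma shapes_tendsto_large_scale:
  fixes x :: real
  assumes "0 < x"
  shows "((\<lambda>a. cutoff (x / a)) \<longlongrightarrow> 1) at_top" "((\<lambda>a. cutoff' (x / a) / a) \<longlongrightarrow> 0) at_top"
    "((\<lambda>a. cutoff'' (x / a) / a\<^sup>2) \<longlongrightarrow> 0) at_top" "((\<lambda>a. corrector (a * x) / a\<^sup>2) \<longlongrightarrow> 0) at_top"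
    "((\<lambda>a. corrector' (a * x) / a) \<longlongrightarrow> 0) at_top" "((\<lambda>a. corrector'' (a * x)) \<longlongrightarrow> 0) at_top"
  unfolding cutoff_def cutoff'_def cutoff''_def corrector_def corrector'_def corrector''_def
  using assms by real_asymp+

section \<open>Approximating u inside the domain of the generator\<close>

locale resolvent_problem =
  fixes N :: nat and \<sigma> b f u :: "nat \<times> real \<Rightarrow> real" and \<rho> :: "nat \<Rightarrow> real"
    and \<eta> \<sigma>0 lam \<theta> :: real
  assumes N: "1 \<le> N"
    and \<sigma>_PC: "PC N \<sigma>" and b_PC: "PC N b" and \<sigma>0: "0 < \<sigma>0"
    and \<sigma>_gt: "\<And>i x. i < N \<Longrightarrow> 0 < x \<Longrightarrow> \<sigma>0 < \<sigma> (i, x)"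
    and f_PC: "PC N f" and u: "C2bG N u"
    and equation: "\<And>p. p \<in> Gamma N \<Longrightarrow> p \<noteq> vtx \<Longrightarrow> Lop N \<sigma> b u p - lam * u p = f p"
    and boundary: "(\<Sum>i<N. \<rho> i * d1 (edge u i) 0) - \<eta> * lam * u vtx = \<eta> * \<theta>"
begin

text \<open>The constant is chosen so that 1/2 \<sigma>_i(0+)^2 correction_i corrector''(0) = \<theta> - f_i(0+);
  then L (approx a) has the same limit \<theta> + lam u(v) at the vertex along every edge.\<close>

definition correction :: "nat \<Rightarrow> real" where
  "correction i = (\<theta> - edge_lim f i) / (edge_lim \<sigma> i)\<^sup>2"

definition approx :: "real \<Rightarrow> nat \<times> real \<Rightarrow> real" where
  "approx a p = u p * cutoff (snd p / a) + correction (fst p) * (corrector (a * snd p) / a\<^sup>2)"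

definition approx_d1 :: "real \<Rightarrow> nat \<Rightarrow> real \<Rightarrow> real" where
  "approx_d1 a i x = d1 (edge u i) x * cutoff (x / a) + edge u i x * (cutoff' (x / a) / a)
    + correction i * (corrector' (a * x) / a)"

definition approx_d2 :: "real \<Rightarrow> nat \<Rightarrow> real \<Rightarrow> real" where
  "approx_d2 a i x = d2 (edge u i) x * cutoff (x / a) + 2 * d1 (edge u i) x * (cutoff' (x / a) / a)
    + edge u i x * (cutoff'' (x / a) / a\<^sup>2) + correction i * corrector'' (a * x)"

definition remainder :: "real \<Rightarrow> nat \<Rightarrow> real \<Rightarrow> real" where
  "remainder a i x = (\<sigma> (i, x))\<^sup>2 * d1 (edge u i) x * (cutoff' (x / a) / a)
    + 1 / 2 * (\<sigma> (i, x))\<^sup>2 * edge u i x * (cutoff'' (x / a) / a\<^sup>2)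
    + b (i, x) * edge u i x * (cutoff' (x / a) / a)
    + 1 / 2 * (\<sigma> (i, x))\<^sup>2 * correction i * corrector'' (a * x)
    + b (i, x) * correction i * (corrector' (a * x) / a)"

definition L_approx :: "real \<Rightarrow> nat \<Rightarrow> real \<Rightarrow> real" where
  "L_approx a i x = (f (i, x) + lam * edge u i x) * cutoff (x / a) + remainder a i x"

lemma u_C2_half: "i < N \<Longrightarrow> C2_half (edge u i)"
  using u unfolding C2bG_def C2G_def by blast

lemma edge_approx:
  "edge (approx a) i = (\<lambda>x. edge u i x * cutoff (x / a) + correction i * (corrector (a * x) / a\<^sup>2))"
  by (auto simp: edge_def approx_def vtx_def)

lemma approx_vtx: "approx a vtx = u vtx"
  by (simp add: approx_def vtx_def)

lemma approx_has_derivatives: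
  assumes i: "i < N" and a: "0 < a" and x: "0 \<le> x"
  shows "(edge (approx a) i has_real_derivative approx_d1 a i x) (at x within {0..})"
    and "(approx_d1 a i has_real_derivative approx_d2 a i x) (at x within {0..})"
proof -
  note u' = C2_halfD(4,5)[OF u_C2_half[OF i] x]
  show "(edge (approx a) i has_real_derivative approx_d1 a i x) (at x within {0..})"
    unfolding edge_approx approx_d1_def using a
    by (auto intro!: derivative_eq_intros u'(1) simp: field_simps power2_eq_square)
  show "(approx_d1 a i has_real_derivative approx_d2 a i x) (at x within {0..})"
    unfolding approx_d1_def[abs_def] approx_d2_def using a
    by (auto intro!: derivative_eq_intros u' simp: field_simps power2_eq_square)
qed

lemma approx_C2_half:
  assumes i: "i < N" and a: "0 < a"
  shows "C2_half (edge (approx a) i)"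
  unfolding C2_half_def
proof (intro exI conjI allI impI)
  note u' = C2_halfD(1-3)[OF u_C2_half[OF i]]
  show "continuous_on {0..} (edge (approx a) i)"
    unfolding edge_approx using a by (intro continuous_intros u') auto
  show "continuous_on {0..} (approx_d1 a i)"
    unfolding approx_d1_def[abs_def] using a by (intro continuous_intros u') auto
  show "continuous_on {0..} (approx_d2 a i)"
    unfolding approx_d2_def[abs_def] using a by (intro continuous_intros u') auto
  show "(edge (approx a) i has_real_derivative approx_d1 a i x) (at x within {0..})"
    and "(approx_d1 a i has_real_derivative approx_d2 a i x) (at x within {0..})" if "0 \<le> x" for x
    using approx_has_derivatives[OF i a that] by blast+
qed

lemma d1_approx: "i < N \<Longrightarrow> 0 < a \<Longrightarrow> 0 \<le> x \<Longrightarrow> d1 (edge (approx a) i) x = approx_d1 a i x"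
  by (rule d1_eqI[OF approx_has_derivatives(1)])

lemma d2_approx: "i < N \<Longrightarrow> 0 < a \<Longrightarrow> 0 \<le> x \<Longrightarrow> d2 (edge (approx a) i) x = approx_d2 a i x"
  by (rule d2_eqI[OF approx_has_derivatives])

lemma u_equation_on_edge:
  assumes i: "i < N" and x: "0 < x"
  shows "1 / 2 * (\<sigma> (i, x))\<^sup>2 * d2 (edge u i) x + b (i, x) * d1 (edge u i) x = f (i, x) + lam * edge u i x"
proof -
  have p: "(i, x) \<in> Gamma N" "(i, x) \<noteq> vtx"
    using i x by (auto simp: Gamma_def vtx_def)
  then show ?thesis
    using equation[OF p] x by (simp add: Lop_def Ledge_def)
qed

lemma Ledge_approx:
  assumes i: "i < N" and a: "0 < a" and x: "0 < x"
  shows "Ledge \<sigma> b (approx a) i x = L_approx a i x"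
proof -
  have "Ledge \<sigma> b (approx a) i x = 1 / 2 * (\<sigma> (i, x))\<^sup>2 * approx_d2 a i x + b (i, x) * approx_d1 a i x"
    unfolding Ledge_def using d1_approx[OF i a] d2_approx[OF i a] x by simp
  also have "\<dots> = (1 / 2 * (\<sigma> (i, x))\<^sup>2 * d2 (edge u i) x + b (i, x) * d1 (edge u i) x) * cutoff (x / a)
      + remainder a i x"
    unfolding approx_d1_def approx_d2_def remainder_def by (simp add: algebra_simps)
  finally show ?thesis
    unfolding L_approx_def u_equation_on_edge[OF i x] .
qed

lemma edge_lim_\<sigma>_nonzero: "i < N \<Longrightarrow> edge_lim \<sigma> i \<noteq> 0"
proof -
  assume i: "i < N"
  have "eventually (\<lambda>x. \<sigma>0 \<le> \<sigma> (i, x)) (at_right 0)"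
    using \<sigma>_gt[OF i] by (auto simp: eventually_at_right_field intro!: exI[of _ 1] less_imp_le)
  then have "\<sigma>0 \<le> edge_lim \<sigma> i"
    using tendsto_lowerbound[OF PC_tendsto_edge_lim[OF \<sigma>_PC i]] by simp
  then show ?thesis
    using \<sigma>0 by simp
qed

lemma L_approx_tendsto_vertex:
  assumes i: "i < N" and a: "0 < a"
  shows "(L_approx a i \<longlongrightarrow> \<theta> + lam * u vtx) (at_right 0)"
proof -
  note u' = C2_halfD(1,2)[OF u_C2_half[OF i]]
  have u_0: "(edge u i \<longlongrightarrow> u vtx) (at_right 0)" "(d1 (edge u i) \<longlongrightarrow> d1 (edge u i) 0) (at_right 0)"
    using u'[unfolded continuous_on_def, rule_format, of 0] by (simp_all add: at_within_Ici_at_right)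
  have lim: "(L_approx a i \<longlongrightarrow> (edge_lim f i + lam * u vtx) * cutoff (0 / a)
      + ((edge_lim \<sigma> i)\<^sup>2 * d1 (edge u i) 0 * (cutoff' (0 / a) / a)
      + 1 / 2 * (edge_lim \<sigma> i)\<^sup>2 * u vtx * (cutoff'' (0 / a) / a\<^sup>2)
      + edge_lim b i * u vtx * (cutoff' (0 / a) / a)
      + 1 / 2 * (edge_lim \<sigma> i)\<^sup>2 * correction i * corrector'' (a * 0)
      + edge_lim b i * correction i * (corrector' (a * 0) / a))) (at_right 0)" (is "(_ \<longlongrightarrow> ?l) _")
    unfolding L_approx_def[abs_def] remainder_def
    by (intro tendsto_intros PC_tendsto_edge_lim[OF _ i] f_PC \<sigma>_PC b_PC u_0
        isCont_tendsto_compose[OF isCont_shapes(1)] isCont_tendsto_compose[OF isCont_shapes(2)]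
        isCont_tendsto_compose[OF isCont_shapes(3)] isCont_tendsto_compose[OF isCont_shapes(5)]
        isCont_tendsto_compose[OF isCont_shapes(6)])
      (use a in auto)
  have eq: "?l = \<theta> + lam * u vtx"
    using edge_lim_\<sigma>_nonzero[OF i] by (simp add: correction_def field_simps)
  show ?thesis
    using lim unfolding eq .
qed

lemma Lop_approx_vtx:
  assumes a: "0 < a"
  shows "Lop N \<sigma> b (approx a) vtx = \<theta> + lam * u vtx"
proof -
  have lim: "(Ledge \<sigma> b (approx a) i \<longlongrightarrow> \<theta> + lam * u vtx) (at_right 0)" if "i < N" for i
  proof -
    have "eventually (\<lambda>x. L_approx a i x = Ledge \<sigma> b (approx a) i x) (at_right 0)"
      using a that by (auto simp: eventually_at_right_field Ledge_approx intro!: exI[of _ 1])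
    then show ?thesis
      using L_approx_tendsto_vertex[OF that a] tendsto_cong by blast
  qed
  have "(THE l. \<forall>i<N. (Ledge \<sigma> b (approx a) i \<longlongrightarrow> l) (at_right 0)) = \<theta> + lam * u vtx"
  proof (rule the_equality)
    fix l assume "\<forall>i<N. (Ledge \<sigma> b (approx a) i \<longlongrightarrow> l) (at_right 0)"
    then show "l = \<theta> + lam * u vtx"
      using N lim[of 0] by (auto intro: tendsto_unique[OF trivial_limit_at_right_real])
  qed (use lim in blast)
  then show ?thesis
    by (simp add: Lop_def)
qed

lemma Lop_approx_edge: "i < N \<Longrightarrow> 0 < a \<Longrightarrow> 0 < x \<Longrightarrow> Lop N \<sigma> b (approx a) (i, x) = L_approx a i x"
  by (simp add: Lop_def vtx_def Ledge_approx)

definition data_bound :: "real \<Rightarrow> bool" where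
  "data_bound K \<longleftrightarrow> 1 \<le> K
    \<and> (\<forall>i<N. \<bar>correction i\<bar> \<le> K \<and> (\<forall>x>0. \<bar>\<sigma> (i, x)\<bar> \<le> K \<and> \<bar>b (i, x)\<bar> \<le> K \<and> \<bar>f (i, x)\<bar> \<le> K
        \<and> \<bar>edge u i x\<bar> \<le> K \<and> \<bar>d1 (edge u i) x\<bar> \<le> K))
    \<and> (\<forall>z\<ge>0. \<bar>cutoff z\<bar> \<le> K \<and> \<bar>cutoff' z\<bar> \<le> K \<and> \<bar>cutoff'' z\<bar> \<le> K
        \<and> \<bar>corrector z\<bar> \<le> K \<and> \<bar>corrector' z\<bar> \<le> K \<and> \<bar>corrector'' z\<bar> \<le> K)"

lemma data_boundD:
  assumes "data_bound K"
  shows "1 \<le> K" and "i < N \<Longrightarrow> \<bar>correction i\<bar> \<le> K"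
    and "i < N \<Longrightarrow> 0 < x \<Longrightarrow> \<bar>\<sigma> (i, x)\<bar> \<le> K" "i < N \<Longrightarrow> 0 < x \<Longrightarrow> \<bar>b (i, x)\<bar> \<le> K"
      "i < N \<Longrightarrow> 0 < x \<Longrightarrow> \<bar>f (i, x)\<bar> \<le> K" "i < N \<Longrightarrow> 0 < x \<Longrightarrow> \<bar>edge u i x\<bar> \<le> K"
      "i < N \<Longrightarrow> 0 < x \<Longrightarrow> \<bar>d1 (edge u i) x\<bar> \<le> K"
    and "0 \<le> z \<Longrightarrow> \<bar>cutoff z\<bar> \<le> K" "0 \<le> z \<Longrightarrow> \<bar>cutoff' z\<bar> \<le> K" "0 \<le> z \<Longrightarrow> \<bar>cutoff'' z\<bar> \<le> K"
      "0 \<le> z \<Longrightarrow> \<bar>corrector z\<bar> \<le> K" "0 \<le> z \<Longrightarrow> \<bar>corrector' z\<bar> \<le> K"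
      "0 \<le> z \<Longrightarrow> \<bar>corrector'' z\<bar> \<le> K"
  using assms unfolding data_bound_def by blast+

lemma data_bound_exists: obtains K where "data_bound K"
proof -
  obtain B\<sigma> where B\<sigma>: "\<And>i x. i < N \<Longrightarrow> 0 < x \<Longrightarrow> \<bar>\<sigma> (i, x)\<bar> \<le> B\<sigma>"
    by (fact PC_abs_bounded[OF \<sigma>_PC])
  obtain Bb where Bb: "\<And>i x. i < N \<Longrightarrow> 0 < x \<Longrightarrow> \<bar>b (i, x)\<bar> \<le> Bb"
    by (fact PC_abs_bounded[OF b_PC])
  obtain Bf where Bf: "\<And>i x. i < N \<Longrightarrow> 0 < x \<Longrightarrow> \<bar>f (i, x)\<bar> \<le> Bf"
    by (fact PC_abs_bounded[OF f_PC])
  obtain Bu where Bu: "\<And>i x. i < N \<Longrightarrow> 0 \<le> x \<Longrightarrow> \<bar>edge u i x\<bar> \<le> Bu \<and> \<bar>d1 (edge u i) x\<bar> \<le> Bu"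
    by (fact C2bG_abs_bounded[OF u])
  obtain C where C: "\<And>z. 0 \<le> z \<Longrightarrow> \<bar>cutoff z\<bar> \<le> C \<and> \<bar>cutoff' z\<bar> \<le> C \<and> \<bar>cutoff'' z\<bar> \<le> C
      \<and> \<bar>corrector z\<bar> \<le> C \<and> \<bar>corrector' z\<bar> \<le> C \<and> \<bar>corrector'' z\<bar> \<le> C"
    by (fact shapes_bounded)
  define K where "K = 1 + \<bar>B\<sigma>\<bar> + \<bar>Bb\<bar> + \<bar>Bf\<bar> + \<bar>Bu\<bar> + \<bar>C\<bar> + (\<Sum>j<N. \<bar>correction j\<bar>)"
  have "0 \<le> (\<Sum>j<N. \<bar>correction j\<bar>)"
    by (simp add: sum_nonneg)
  then have le_K: "B\<sigma> \<le> K" "Bb \<le> K" "Bf \<le> K" "Bu \<le> K" "C \<le> K" "(\<Sum>j<N. \<bar>correction j\<bar>) \<le> K" "1 \<le> K"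
    unfolding K_def by (smt (verit) abs_ge_self abs_ge_zero)+
  have "data_bound K"
    unfolding data_bound_def
  proof (intro conjI allI impI le_K(7))
    fix i assume i: "i < N"
    show "\<bar>correction i\<bar> \<le> K"
      using member_le_sum[of i "{..<N}" "\<lambda>j. \<bar>correction j\<bar>"] i le_K(6) by force
    fix x :: real assume x: "0 < x"
    show "\<bar>\<sigma> (i, x)\<bar> \<le> K" "\<bar>b (i, x)\<bar> \<le> K" "\<bar>f (i, x)\<bar> \<le> K" "\<bar>edge u i x\<bar> \<le> K" "\<bar>d1 (edge u i) x\<bar> \<le> K"
      using B\<sigma>[OF i x] Bb[OF i x] Bf[OF i x] Bu[OF i less_imp_le[OF x]] le_K by (meson order_trans)+
  next
    fix z :: real assume "0 \<le> z"
    then show "\<bar>cutoff z\<bar> \<le> K" "\<bar>cutoff' z\<bar> \<le> K" "\<bar>cutoff'' z\<bar> \<le> K"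
      "\<bar>corrector z\<bar> \<le> K" "\<bar>corrector' z\<bar> \<le> K" "\<bar>corrector'' z\<bar> \<le> K"
      using C le_K(5) by (meson order_trans)+
  qed
  then show ?thesis
    by (rule that)
qed

lemma abs_\<sigma>_square_le:
  assumes "data_bound K" "i < N" "0 < x"
  shows "\<bar>(\<sigma> (i, x))\<^sup>2\<bar> \<le> K * K" "\<bar>1 / 2 * (\<sigma> (i, x))\<^sup>2\<bar> \<le> 1 / 2 * (K * K)"
  using abs_mult_le[OF data_boundD(3)[OF assms] data_boundD(3)[OF assms]]
  by (simp_all add: power2_eq_square abs_mult)

lemma approx_C0:
  assumes a: "0 < a"
  shows "C0 N (approx a)"
  unfolding C0_def contG_def
proof (intro conjI allI impI)
  fix i assume i: "i < N"
  show "continuous_on {0..} (edge (approx a) i)"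
    by (rule C2_halfD(1)[OF approx_C2_half[OF i a]])
  obtain K where K: "data_bound K"
    using data_bound_exists by blast
  have "eventually (\<lambda>x. \<bar>edge u i x\<bar> \<le> K) at_top"
    using eventually_gt_at_top[of 0] by eventually_elim (rule data_boundD(6)[OF K i])
  moreover have "a\<^sup>2 \<noteq> 0"
    using a by simp
  ultimately have "((\<lambda>x. edge u i x * cutoff (x / a) + correction i * (corrector (a * x) / a\<^sup>2)) \<longlongrightarrow> 0 + correction i * (0 / a\<^sup>2)) at_top"
    by (intro tendsto_intros tendsto_mult_zero_if_bounded shapes_scaled_tendsto_at_top a)
  then show "(edge (approx a) i \<longlongrightarrow> 0) at_top"
    by (simp add: edge_approx)
qed

lemma L_approx_tendsto_at_top:
  assumes i: "i < N" and a: "0 < a"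
  shows "(L_approx a i \<longlongrightarrow> 0) at_top"
proof -
  obtain K where K: "data_bound K"
    using data_bound_exists by blast
  note k = data_boundD(2-7)[OF K i] abs_\<sigma>_square_le[OF K i]
  have ev: "eventually P at_top" if "\<And>x. 0 < x \<Longrightarrow> P x" for P :: "real \<Rightarrow> bool"
    using eventually_gt_at_top[of "0::real"] by (rule eventually_mono) (rule that)
  have "eventually (\<lambda>x. \<bar>f (i, x) + lam * edge u i x\<bar> \<le> K + \<bar>lam\<bar> * K) at_top"
  proof (rule ev)
    fix x :: real assume "0 < x"
    then have "\<bar>f (i, x)\<bar> \<le> K" "\<bar>lam * edge u i x\<bar> \<le> \<bar>lam\<bar> * K"
      using k abs_mult_le[of lam "\<bar>lam\<bar>" "edge u i x" K] by auto
    then show "\<bar>f (i, x) + lam * edge u i x\<bar> \<le> K + \<bar>lam\<bar> * K"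
      using abs_triangle_ineq[of "f (i, x)" "lam * edge u i x"] by linarith
  qed
  moreover have "eventually (\<lambda>x. \<bar>(\<sigma> (i, x))\<^sup>2 * d1 (edge u i) x\<bar> \<le> K * K * K) at_top"
    "eventually (\<lambda>x. \<bar>1 / 2 * (\<sigma> (i, x))\<^sup>2 * edge u i x\<bar> \<le> 1 / 2 * (K * K) * K) at_top"
    "eventually (\<lambda>x. \<bar>b (i, x) * edge u i x\<bar> \<le> K * K) at_top"
    "eventually (\<lambda>x. \<bar>1 / 2 * (\<sigma> (i, x))\<^sup>2 * correction i\<bar> \<le> 1 / 2 * (K * K) * K) at_top"
    "eventually (\<lambda>x. \<bar>b (i, x) * correction i\<bar> \<le> K * K) at_top"
    using k by (auto intro!: ev abs_mult_le)
  ultimately show ?thesis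
    unfolding L_approx_def[abs_def] remainder_def
    by (intro tendsto_add_zero tendsto_divide_zero tendsto_mult_zero_if_bounded
        shapes_scaled_tendsto_at_top[OF a] | assumption)+
qed

lemma continuous_on_L_approx:
  assumes i: "i < N" and a: "0 < a"
  shows "continuous_on {0<..} (L_approx a i)"
proof -
  have "continuous_on {0<..} (edge u i)" "continuous_on {0<..} (d1 (edge u i))"
    using C2_halfD(1,2)[OF u_C2_half[OF i]] by (auto intro: continuous_on_subset)
  then show ?thesis
    unfolding L_approx_def[abs_def] remainder_def using a
    by (intro continuous_intros PC_continuous_on[OF f_PC i] PC_continuous_on[OF \<sigma>_PC i]
        PC_continuous_on[OF b_PC i]) auto
qed

lemma Lop_approx_C0:
  assumes a: "0 < a"
  shows "C0 N (Lop N \<sigma> b (approx a))"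
  unfolding C0_def contG_def
proof (intro conjI allI impI)
  fix i assume i: "i < N"
  have ev_right: "eventually (\<lambda>x. L_approx a i x = edge (Lop N \<sigma> b (approx a)) i x) (at_right 0)"
    by (auto simp: eventually_at_right_field Lop_approx_edge[OF i a] intro!: exI[of _ 1])
  have ev_top: "eventually (\<lambda>x. L_approx a i x = edge (Lop N \<sigma> b (approx a)) i x) at_top"
    using eventually_gt_at_top[of 0] by eventually_elim (simp add: Lop_approx_edge[OF i a])
  show "continuous_on {0..} (edge (Lop N \<sigma> b (approx a)) i)"
  proof (rule continuous_on_Ici_if_continuous_at_right)
    show "continuous_on {0<..} (edge (Lop N \<sigma> b (approx a)) i)"
      using continuous_on_L_approx[OF i a] by (rule continuous_on_cong[THEN iffD1, rotated 2]) (auto simp: Lop_approx_edge[OF i a])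
    show "(edge (Lop N \<sigma> b (approx a)) i \<longlongrightarrow> edge (Lop N \<sigma> b (approx a)) i 0) (at_right 0)"
      using L_approx_tendsto_vertex[OF i a] tendsto_cong[OF ev_right] by (simp add: Lop_approx_vtx[OF a])
  qed
  show "(edge (Lop N \<sigma> b (approx a)) i \<longlongrightarrow> 0) at_top"
    using L_approx_tendsto_at_top[OF i a] tendsto_cong[OF ev_top] by simp
qed

lemma approx_DL:
  assumes a: "0 < a"
  shows "DL N \<sigma> b \<eta> \<rho> (approx a)"
  unfolding DL_def
proof (intro conjI)
  show "C2G N (approx a)"
    unfolding C2G_def contG_def using approx_C2_half[OF _ a] C2_halfD(1) by blast
  show "C0 N (approx a)" "C0 N (Lop N \<sigma> b (approx a))"
    using approx_C0[OF a] Lop_approx_C0[OF a] .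
  have "(\<Sum>i<N. \<rho> i * d1 (edge (approx a) i) 0) = (\<Sum>i<N. \<rho> i * d1 (edge u i) 0)"
    by (intro sum.cong) (simp_all add: d1_approx a approx_d1_def)
  also have "\<dots> = \<eta> * (\<theta> + lam * u vtx)"
    using boundary by (simp add: algebra_simps)
  finally show "\<eta> * Lop N \<sigma> b (approx a) vtx = (\<Sum>i<N. \<rho> i * d1 (edge (approx a) i) 0)"
    by (simp add: Lop_approx_vtx[OF a])
qed

lemma approx_tendsto:
  assumes p: "p \<in> Gamma N"
  shows "((\<lambda>a. approx a p) \<longlongrightarrow> u p) at_top"
proof (cases "p = vtx")
  case False
  then obtain i x where ix: "p = (i, x)" "0 < x"
    using p by (elim Gamma_edge_pointE)
  have "((\<lambda>a. u p * cutoff (x / a) + correction i * (corrector (a * x) / a\<^sup>2))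
      \<longlongrightarrow> u p * 1 + correction i * 0) at_top"
    by (intro tendsto_intros shapes_tendsto_large_scale ix(2))
  then show ?thesis
    by (simp add: approx_def ix(1))
qed (simp add: approx_vtx)

lemma resolvent_approx_vtx: "0 < a \<Longrightarrow> lam * approx a vtx - Lop N \<sigma> b (approx a) vtx = - \<theta>"
  by (simp add: Lop_approx_vtx approx_vtx)

lemma resolvent_approx_edge:
  assumes "i < N" "0 < a" "0 < x"
  shows "lam * approx a (i, x) - Lop N \<sigma> b (approx a) (i, x)
    = lam * correction i * (corrector (a * x) / a\<^sup>2) - f (i, x) * cutoff (x / a) - remainder a i x"
  using assms by (simp add: Lop_approx_edge approx_def L_approx_def algebra_simps)

lemma resolvent_approx_tendsto:
  assumes p: "p \<in> Gamma N"
  shows "((\<lambda>a. lam * approx a p - Lop N \<sigma> b (approx a) p) \<longlongrightarrow> - (if p \<noteq> vtx then f p else \<theta>)) at_top"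
proof (cases "p = vtx")
  case True
  have "eventually (\<lambda>a. - \<theta> = lam * approx a p - Lop N \<sigma> b (approx a) p) at_top"
    using eventually_gt_at_top[of 0] by eventually_elim (simp add: True resolvent_approx_vtx)
  then show ?thesis
    using True tendsto_cong by fastforce
next
  case False
  then obtain i x where ix: "p = (i, x)" "i < N" "0 < x"
    using p by (elim Gamma_edge_pointE)
  have "((\<lambda>a. lam * correction i * (corrector (a * x) / a\<^sup>2) - f (i, x) * cutoff (x / a) - remainder a i x)
      \<longlongrightarrow> lam * correction i * 0 - f (i, x) * 1 - ((\<sigma> (i, x))\<^sup>2 * d1 (edge u i) x * 0
        + 1 / 2 * (\<sigma> (i, x))\<^sup>2 * edge u i x * 0 + b (i, x) * edge u i x * 0
        + 1 / 2 * (\<sigma> (i, x))\<^sup>2 * correction i * 0 + b (i, x) * correction i * 0)) at_top"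
    unfolding remainder_def by (intro tendsto_intros shapes_tendsto_large_scale ix(3))
  moreover have "eventually (\<lambda>a. lam * correction i * (corrector (a * x) / a\<^sup>2) - f (i, x) * cutoff (x / a)
      - remainder a i x = lam * approx a p - Lop N \<sigma> b (approx a) p) at_top"
    using eventually_gt_at_top[of 0] by eventually_elim (simp add: ix resolvent_approx_edge)
  ultimately show ?thesis
    using False ix(1) tendsto_cong by fastforce
qed

lemma abs_resolvent_approx_edge_le:
  assumes K: "data_bound K" and a: "1 \<le> a" and i: "i < N" and x: "0 < x"
  shows "\<bar>lam * approx a (i, x) - Lop N \<sigma> b (approx a) (i, x)\<bar> \<le> \<bar>lam\<bar> * K * K + K * K
    + K * K * K * K + 1 / 2 * (K * K) * K * K + K * K * K + 1 / 2 * (K * K) * K * K + K * K * K"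
proof -
  note k = data_boundD(2)[OF K i] data_boundD(3-7)[OF K i x] abs_\<sigma>_square_le[OF K i x]
  have div: "\<bar>y / a\<bar> \<le> \<bar>y\<bar>" "\<bar>y / a\<^sup>2\<bar> \<le> \<bar>y\<bar>" for y
    using a by (simp_all add: abs_divide divide_le_eq_1 divide_le_eq mult_le_cancel_left1 one_le_power)
  have "0 \<le> x / a" "0 \<le> a * x"
    using a x by simp_all
  then have s: "\<bar>cutoff (x / a)\<bar> \<le> K" "\<bar>cutoff' (x / a) / a\<bar> \<le> K" "\<bar>cutoff'' (x / a) / a\<^sup>2\<bar> \<le> K"
    "\<bar>corrector (a * x) / a\<^sup>2\<bar> \<le> K" "\<bar>corrector' (a * x) / a\<bar> \<le> K" "\<bar>corrector'' (a * x)\<bar> \<le> K"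
    using data_boundD(8-13)[OF K] div order_trans by metis+
  have triangle: "\<bar>t1 - t2 - (t3 + t4 + t5 + t6 + t7)\<bar> \<le> b1 + b2 + b3 + b4 + b5 + b6 + b7"
    if "\<bar>t1\<bar> \<le> b1" "\<bar>t2\<bar> \<le> b2" "\<bar>t3\<bar> \<le> b3" "\<bar>t4\<bar> \<le> b4" "\<bar>t5\<bar> \<le> b5"
      "\<bar>t6\<bar> \<le> b6" "\<bar>t7\<bar> \<le> b7" for t1 t2 t3 t4 t5 t6 t7 b1 b2 b3 b4 b5 b6 b7 :: real
    using that unfolding abs_le_iff by linarith
  have a_pos: "0 < a"
    using a by simp
  show ?thesis
    unfolding resolvent_approx_edge[OF i a_pos x] remainder_def
    by (intro triangle abs_mult_le order_refl k s) auto
qed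

lemma resolvent_approx_bounded:
  obtains B where "\<And>a p. 1 \<le> a \<Longrightarrow> p \<in> Gamma N \<Longrightarrow> \<bar>lam * approx a p - Lop N \<sigma> b (approx a) p\<bar> \<le> B"
proof -
  obtain K where K: "data_bound K"
    using data_bound_exists by blast
  define B where "B = \<bar>lam\<bar> * K * K + K * K + K * K * K * K + 1 / 2 * (K * K) * K * K
    + K * K * K + 1 / 2 * (K * K) * K * K + K * K * K"
  have "0 \<le> B"
    using data_boundD(1)[OF K] by (simp add: B_def)
  have "\<bar>lam * approx a p - Lop N \<sigma> b (approx a) p\<bar> \<le> B + \<bar>\<theta>\<bar>" if a: "1 \<le> a" and p: "p \<in> Gamma N" for a p
  proof (cases "p = vtx")
    case True
    then show ?thesis
      using a \<open>0 \<le> B\<close> by (simp add: resolvent_approx_vtx)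
  next
    case False
    then obtain i x where "p = (i, x)" "i < N" "0 < x"
      using p by (elim Gamma_edge_pointE)
    then show ?thesis
      using abs_resolvent_approx_edge_le[OF K a] unfolding B_def by fastforce
  qed
  then show ?thesis
    by (rule that)
qed

lemma u_eq_expected_discounted_integral:
  assumes process: "star_process N T P X"
    and generator: "has_generator N T (Lop N \<sigma> b) (DL N \<sigma> b \<eta> \<rho>)"
    and lam: "0 < lam" and x: "x \<in> Gamma N"
  shows "u x = - (\<integral>\<omega>. (LINT s:{0..}|lborel.
    (if X s \<omega> \<noteq> vtx then f (X s \<omega>) else \<theta>) * exp (- lam * s)) \<partial>P x)"
proof -
  interpret star_process N T P X
    by (rule process)
  define a where "a n = real (Suc n)" for n
  have a: "filterlim a at_top sequentially"
    unfolding a_def by (rule filterlim_compose[OF filterlim_real_sequentially filterlim_Suc])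
  have a_pos: "0 < a n" and a_ge_1: "1 \<le> a n" for n
    by (simp_all add: a_def)
  obtain B where B: "\<And>n p. p \<in> Gamma N \<Longrightarrow> \<bar>lam * approx (a n) p - Lop N \<sigma> b (approx (a n)) p\<bar> \<le> B"
    using resolvent_approx_bounded a_ge_1 by metis
  show ?thesis
  proof (rule representation_by_resolvent_approximation[OF x lam approx_C0[OF a_pos] Lop_approx_C0[OF a_pos] _ _ _ B])
    show "((\<lambda>r. gnorm N (\<lambda>p. (T r (approx (a n)) p - approx (a n) p) / r - Lop N \<sigma> b (approx (a n)) p))
        \<longlongrightarrow> 0) (at_right 0)" for n
      using generator approx_C0[OF a_pos] approx_DL[OF a_pos] unfolding has_generator_def by blast
    show "continuous_on {0<..} (\<lambda>y. if (i, y) \<noteq> vtx then f (i, y) else \<theta>)" if "i < N" for i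
      using PC_continuous_on[OF f_PC that] by (rule continuous_on_cong[THEN iffD1, rotated 2]) (auto simp: vtx_def)
    show "(\<lambda>n. lam * approx (a n) p - Lop N \<sigma> b (approx (a n)) p) \<longlonglongrightarrow> - (if p \<noteq> vtx then f p else \<theta>)"
      if "p \<in> Gamma N" for p
      using filterlim_compose[OF resolvent_approx_tendsto[OF that] a] by simp
    show "(\<lambda>n. approx (a n) x) \<longlonglongrightarrow> u x"
      using filterlim_compose[OF approx_tendsto[OF x] a] by simp
  qed
qed

end

theorem proposition5p1:
  fixes N :: nat and \<sigma> b f u :: "nat \<times> real \<Rightarrow> real" and \<rho> :: "nat \<Rightarrow> real"
    and \<eta> \<sigma>0 lam \<theta> :: real
    and T :: "real \<Rightarrow> (nat \<times> real \<Rightarrow> real) \<Rightarrow> (nat \<times> real \<Rightarrow> real)"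
    and P :: "nat \<times> real \<Rightarrow> 'a measure" and X :: "real \<Rightarrow> 'a \<Rightarrow> nat \<times> real"
  assumes N: "N \<ge> 1"
    and coeff: "PC N \<sigma>" "PC N b" "\<sigma>0 > 0" "\<forall>i<N. \<forall>x>0. \<sigma> (i, x) > \<sigma>0"
    and eta: "\<eta> \<ge> 0"
    and rho: "\<forall>i<N. \<rho> i > 0" "(\<Sum>i<N. \<rho> i) = 1"
    and sg: "strongly_continuous_semigroup N T"
    and gen: "has_generator N T (Lop N \<sigma> b) (DL N \<sigma> b \<eta> \<rho>)"
    and proc: "process_assoc N T P X"
    and lam: "lam > 0"
    and fPC: "PC N f"
    and fbdd: "bounded (f ` Gamma N)"
    and u: "C2bG N u"
    and eq: "\<forall>p\<in>Gamma N. p \<noteq> vtx \<longrightarrow> Lop N \<sigma> b u p - lam * u p = f p"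
    and bc: "(\<Sum>i<N. \<rho> i * d1 (edge u i) 0) - \<eta> * lam * u vtx = \<eta> * \<theta>"
  shows "\<forall>x\<in>Gamma N. u x = - (\<integral>\<omega>. (\<integral>s\<in>{0..}.
            ((if X s \<omega> \<noteq> vtx then f (X s \<omega>) else \<theta>) * exp (- lam * s)) \<partial>lborel) \<partial>P x)"
proof
  fix x assume x: "x \<in> Gamma N"
  interpret resolvent_problem N \<sigma> b f u \<rho> \<eta> \<sigma>0 lam \<theta>
    by unfold_locales (use N coeff fPC u eq bc in auto)
  have "star_process N T P X"
    by unfold_locales (rule sg proc)+
  from u_eq_expected_discounted_integral[OF this gen lam x]
  show "u x = - (\<integral>\<omega>. (\<integral>s\<in>{0..}.
            ((if X s \<omega> \<noteq> vtx then f (X s \<omega>) else \<theta>) * exp (- lam * s)) \<partial>lborel) \<partial>P x)"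
    by simp
qed

end
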